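(* Let $m,n\in\mathbb{N}$, $q\in(-1,1)\setminus\{0\}$, and let $\alpha_\pm=p_\pm q_\pm$, $\beta_\pm=p_\pm+q_\pm$ with $p_\pm,q_\pm\in(-1,1)\setminus\{0\}$ (equivalently $0<\alpha_\pm^2<1$ and $4\alpha_\pm\le\beta_\pm^2\le(1+\alpha_\pm)^2$). For $\xi=(\xi_1,\dots,\xi_m)\in\mathbb{R}^m_{\rm reg}$ define $\psi_\xi:\Lambda^{(n,m)}\to\mathbb{C}$ by $\psi_\xi(\mu)=R_{\mu'}(\xi_1,\dots,\xi_m)$. If $\xi\in\mathbb{R}^m_{\rm reg}$ satisfies the Bethe Ansatz equations $$e^{2{\rm i}n\xi_j}=\frac{(1-\beta_+e^{{\rm i}\xi_j}+\alpha_+e^{2{\rm i}\xi_j})}{(e^{2{\rm i}\xi_j}-\beta_+e^{{\rm i}\xi_j}+\alpha_+)}\frac{(1-\beta_-e^{{\rm i}\xi_j}+\alpha_-e^{2{\rm i}\xi_j})}{(e^{2{\rm i}\xi_j}-\beta_-e^{{\rm i}\xi_j}+\alpha_-)}\prod_{1\le k\le m,\,k\ne j}\frac{(1-qe^{{\rm i}(\xi_j-\xi_k)})(1-qe^{{\rm i}(\xi_j+\xi_k)})}{(e^{{\rm i}(\xi_j-\xi_k)}-q)(e^{{\rm i}(\xi_j+\xi_k)}-q)}$$ for $j=1,\dots,m$, then $H\psi_\xi=E(\xi)\psi_\xi$ with $E(\xi)=2(1-q)\sum_{1\le j\le m}\cos(\xi_j)$.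
   Context: Let $\Lambda^{(n,m)}=\{\mu\in\mathbb{Z}^n\mid m\ge\mu_1\ge\cdots\ge\mu_n\ge0\}$ (similarly $\Lambda^{(m,n)}\subset\mathbb{Z}^m$ with parts between $0$ and $n$), with conventions $\mu_0\equiv m$, $\mu_{n+1}\equiv0$. Let $e_1,\dots,e_n$ be the standard unit vectors of $\mathbb{Z}^n$, and $\delta_i=1$ if $i=0$, $\delta_i=0$ otherwise. The hamiltonian $H$ acts on $\psi:\Lambda^{(n,m)}\to\mathbb{C}$ by $(H\psi)(\mu)=\bigl(\beta_+(1-q^{m-\mu_1})+\beta_-(1-q^{\mu_n})\bigr)\psi(\mu)+\sum_{1\le i\le n,\ \mu+e_i\in\Lambda^{(n,m)}}(1-\alpha_+q^{m-\mu_1-1})^{\delta_{i-1}}(1-q^{\mu_{i-1}-\mu_i})\psi(\mu+e_i)+\sum_{1\le i\le n,\ \mu-e_i\in\Lambda^{(n,m)}}(1-\alpha_-q^{\mu_n-1})^{\delta_{n-i}}(1-q^{\mu_i-\mu_{i+1}})\psi(\mu-e_i)$. For $\mu\in\Lambda^{(n,m)}$, its conjugate $\mu'\in\Lambda^{(m,n)}$ is the unique partition in $\Lambda^{(m,n)}$ in which the value $i$ occurs exactly $\mu_i-\mu_{i+1}$ times for $i=0,\dots,n$, i.e. $\mu'=(0^{m-\mu_1}1^{\mu_1-\mu_2}\cdots(n-1)^{\mu_{n-1}-\mu_n}n^{\mu_n})$ written in weakly decreasing order. Let $\mathbb{R}^m_{\rm reg}=\{\xi\in\mathbb{R}^m\mid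 2\xi_j,\ \xi_j-\xi_k,\ \xi_j+\xi_k\notin2\pi\mathbb{Z}\ \forall\,1\le j\ne k\le m\}$. For $\lambda\in\Lambda^{(m,n)}$ and $\xi\in\mathbb{R}^m_{\rm reg}$ the hyperoctahedral Hall-Littlewood polynomial is $R_\lambda(\xi_1,\dots,\xi_m)=\sum_{\sigma\in S_m}\sum_{\epsilon\in\{1,-1\}^m}C(\epsilon_1\xi_{\sigma(1)},\dots,\epsilon_m\xi_{\sigma(m)})\exp\bigl({\rm i}\epsilon_1\xi_{\sigma(1)}\lambda_1+\cdots+{\rm i}\epsilon_m\xi_{\sigma(m)}\lambda_m\bigr)$, where $C(\xi_1,\dots,\xi_m)=\prod_{1\le j\le m}\frac{1-\beta_+e^{-{\rm i}\xi_j}+\alpha_+e^{-2{\rm i}\xi_j}}{1-e^{-2{\rm i}\xi_j}}\prod_{1\le j<k\le m}\frac{1-qe^{-{\rm i}(\xi_j-\xi_k)}}{1-e^{-{\rm i}(\xi_j-\xi_k)}}\cdot\frac{1-qe^{-{\rm i}(\xi_j+\xi_k)}}{1-e^{-{\rm i}(\xi_j+\xi_k)}}$. *)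

theory Defs
  imports "HOL-Analysis.Analysis" "HOL-Combinatorics.Permutations"
begin

text \<open>Partitions mu in Lambda^(n,m) are encoded as functions nat => int, with entries
  mu 1, ..., mu n and value 0 outside the index range {1..n}.\<close>

definition Lam :: "nat \<Rightarrow> nat \<Rightarrow> (nat \<Rightarrow> int) set" where
  "Lam n m = {\<mu>. (\<forall>i. (i < 1 \<or> n < i) \<longrightarrow> \<mu> i = 0)
                 \<and> (\<forall>i\<in>{1..n}. 0 \<le> \<mu> i \<and> \<mu> i \<le> int m)
                 \<and> (\<forall>i\<in>{1..<n}. \<mu> (Suc i) \<le> \<mu> i)}"

definition ext :: "nat \<Rightarrow> nat \<Rightarrow> (nat \<Rightarrow> int) \<Rightarrow> nat \<Rightarrow> int" where
  "ext n m \<mu> i = (if i = 0 then int m else if i = Suc n then 0 else \<mu> i)"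

definition plusu :: "(nat \<Rightarrow> int) \<Rightarrow> nat \<Rightarrow> nat \<Rightarrow> int" where
  "plusu \<mu> i = (\<lambda>k. \<mu> k + (if k = i then 1 else 0))"

definition minusu :: "(nat \<Rightarrow> int) \<Rightarrow> nat \<Rightarrow> nat \<Rightarrow> int" where
  "minusu \<mu> i = (\<lambda>k. \<mu> k - (if k = i then 1 else 0))"

definition Ham :: "real \<Rightarrow> real \<Rightarrow> real \<Rightarrow> real \<Rightarrow> real \<Rightarrow> nat \<Rightarrow> nat
    \<Rightarrow> ((nat \<Rightarrow> int) \<Rightarrow> complex) \<Rightarrow> (nat \<Rightarrow> int) \<Rightarrow> complex" where
  "Ham \<alpha>p \<beta>p \<alpha>m \<beta>m q n m \<psi> \<mu> =
     complex_of_real (\<beta>p * (1 - q ^ nat (int m - ext n m \<mu> 1)) + \<beta>m * (1 - q ^ nat (ext n m \<mu> n))) * \<psi> \<mu>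
   + (\<Sum>i\<in>{i\<in>{1..n}. plusu \<mu> i \<in> Lam n m}.
        complex_of_real ((if i = 1 then 1 - \<alpha>p * q ^ nat (int m - ext n m \<mu> 1 - 1) else 1)
                         * (1 - q ^ nat (ext n m \<mu> (i - 1) - ext n m \<mu> i))) * \<psi> (plusu \<mu> i))
   + (\<Sum>i\<in>{i\<in>{1..n}. minusu \<mu> i \<in> Lam n m}.
        complex_of_real ((if i = n then 1 - \<alpha>m * q ^ nat (ext n m \<mu> n - 1) else 1)
                         * (1 - q ^ nat (ext n m \<mu> i - ext n m \<mu> (Suc i)))) * \<psi> (minusu \<mu> i))"

definition conjp :: "nat \<Rightarrow> nat \<Rightarrow> (nat \<Rightarrow> int) \<Rightarrow> (nat \<Rightarrow> int)" where
  "conjp n m \<mu> = (THE la. la \<in> Lam m n \<and>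
      (\<forall>i\<in>{0..n}. int (card {j\<in>{1..m}. la j = int i}) = ext n m \<mu> i - ext n m \<mu> (Suc i)))"

definition reg :: "nat \<Rightarrow> (nat \<Rightarrow> real) \<Rightarrow> bool" where
  "reg m \<xi> \<longleftrightarrow>
     (\<forall>j\<in>{1..m}. \<forall>k::int. 2 * \<xi> j \<noteq> 2 * pi * of_int k) \<and>
     (\<forall>j\<in>{1..m}. \<forall>l\<in>{1..m}. j \<noteq> l \<longrightarrow> (\<forall>k::int.
        \<xi> j - \<xi> l \<noteq> 2 * pi * of_int k \<and> \<xi> j + \<xi> l \<noteq> 2 * pi * of_int k))"

definition cexp :: "real \<Rightarrow> complex" where
  "cexp t = exp (\<i> * complex_of_real t)"

definition Cf :: "real \<Rightarrow> real \<Rightarrow> real \<Rightarrow> nat \<Rightarrow> (nat \<Rightarrow> real) \<Rightarrow> complex" where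
  "Cf \<alpha>p \<beta>p q m x =
     (\<Prod>j=1..m. (1 - \<beta>p * cexp (- x j) + \<alpha>p * cexp (- 2 * x j)) / (1 - cexp (- 2 * x j)))
   * (\<Prod>j=1..m. \<Prod>k=Suc j..m.
        (1 - q * cexp (- (x j - x k))) / (1 - cexp (- (x j - x k)))
      * ((1 - q * cexp (- (x j + x k))) / (1 - cexp (- (x j + x k)))))"

definition signs :: "nat \<Rightarrow> (nat \<Rightarrow> real) set" where
  "signs m = {\<epsilon>. (\<forall>j\<in>{1..m}. \<epsilon> j = 1 \<or> \<epsilon> j = -1) \<and> (\<forall>j. j \<notin> {1..m} \<longrightarrow> \<epsilon> j = 1)}"

definition HLR :: "real \<Rightarrow> real \<Rightarrow> real \<Rightarrow> nat \<Rightarrow> (nat \<Rightarrow> int) \<Rightarrow> (nat \<Rightarrow> real) \<Rightarrow> complex" where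
  "HLR \<alpha>p \<beta>p q m la \<xi> =
     (\<Sum>\<sigma>\<in>{\<sigma>. \<sigma> permutes {1..m}}. \<Sum>\<epsilon>\<in>signs m.
        Cf \<alpha>p \<beta>p q m (\<lambda>j. \<epsilon> j * \<xi> (\<sigma> j))
        * exp (\<i> * complex_of_real (\<Sum>j=1..m. \<epsilon> j * \<xi> (\<sigma> j) * of_int (la j))))"

definition bethe :: "real \<Rightarrow> real \<Rightarrow> real \<Rightarrow> real \<Rightarrow> real \<Rightarrow> nat \<Rightarrow> nat \<Rightarrow> (nat \<Rightarrow> real) \<Rightarrow> bool" where
  "bethe \<alpha>p \<beta>p \<alpha>m \<beta>m q n m \<xi> \<longleftrightarrow>
    (\<forall>j\<in>{1..m}.
      cexp (2 * real n * \<xi> j) =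
        (1 - \<beta>p * cexp (\<xi> j) + \<alpha>p * cexp (2 * \<xi> j)) / (cexp (2 * \<xi> j) - \<beta>p * cexp (\<xi> j) + \<alpha>p)
      * ((1 - \<beta>m * cexp (\<xi> j) + \<alpha>m * cexp (2 * \<xi> j)) / (cexp (2 * \<xi> j) - \<beta>m * cexp (\<xi> j) + \<alpha>m))
      * (\<Prod>k\<in>{1..m} - {j}.
          ((1 - q * cexp (\<xi> j - \<xi> k)) * (1 - q * cexp (\<xi> j + \<xi> k)))
          / ((cexp (\<xi> j - \<xi> k) - q) * (cexp (\<xi> j + \<xi> k) - q))))"

end

theory Submission
  imports Defs
begin

text \<open>
  \<open>R_\<lambda>(\<xi>)\<close> is a sum of plane waves over the hyperoctahedral group. Pairing its terms by a
  sign-reversing involution (an adjacent transposition, or the sign flip of one coordinate) yields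
  local relations for \<open>F \<lambda> = R_\<lambda>(\<xi>)\<close>: the exchange relation
  \<open>F (\<lambda> + e_{p+1}) = q F (\<lambda> + e_p)\<close> when \<open>\<lambda>_p = \<lambda>_{p+1}\<close>; a boundary relation when
  \<open>\<lambda>_m = 0\<close>; a boundary relation when \<open>\<lambda>_1 = n\<close>, which is where the Bethe equations enter;
  and the free equation \<open>(1 - q) \<Sum>_l (F (\<lambda> + e_l) + F (\<lambda> - e_l)) = E(\<xi>) F \<lambda>\<close>.

  Under conjugation, moving one particle of \<open>\<mu>\<close> changes the first or last entry of a cluster
  of equal parts of \<open>\<lambda> = \<mu>'\<close>, and a cluster of value \<open>v\<close> has size \<open>k_v = \<mu>_v - \<mu>_{v+1}\<close>.
  Along a cluster the exchange relation makes \<open>F (\<lambda> \<plusminus> e_l)\<close> geometric in \<open>q\<close>, so the free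
  equation splits into the terms \<open>(1 - q^{k_v}) F (\<lambda> \<plusminus> e_l)\<close> of \<open>H\<close>, with the two walls
  accounted for by the boundary relations.
\<close>

section \<open>Exponentials and regularity\<close>

lemma cexp_add: "cexp (a + b) = cexp a * cexp b"
  by (simp add: cexp_def distrib_left exp_add)

lemma cexp_diff: "cexp (a - b) = cexp a / cexp b"
  by (simp add: cexp_def right_diff_distrib exp_diff)

lemma cexp_minus: "cexp (- a) = inverse (cexp a)"
  by (simp add: cexp_def exp_minus)

lemma cexp_neq_0 [simp]: "cexp a \<noteq> 0"
  by (simp add: cexp_def)

lemma norm_cexp [simp]: "norm (cexp a) = 1"
  by (simp add: cexp_def)

lemma cexp_of_nat_mult: "cexp (real k * a) = cexp a ^ k"
  unfolding cexp_def by (simp add: mult.left_commute flip: exp_of_nat_mult)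

lemma cexp_double: "cexp (2 * a) = cexp a ^ 2"
  using cexp_of_nat_mult[of 2 a] by simp

lemma cexp_eq_1_iff: "cexp t = 1 \<longleftrightarrow> (\<exists>k::int. t = 2 * pi * of_int k)"
proof -
  have "cexp t = 1 \<longleftrightarrow> (\<exists>k::int. t = real_of_int (2 * k) * pi)"
    unfolding cexp_def exp_eq_1 by simp
  then show ?thesis by (simp add: mult.commute mult.left_commute)
qed

lemma reg_cexp_power2_neq_1:
  assumes "reg m y" "j \<in> {1..m}"
  shows "cexp (y j) ^ 2 \<noteq> 1"
  using assms unfolding reg_def cexp_double[symmetric] cexp_eq_1_iff by blast

lemma reg_cexp_neq:
  assumes "reg m y" "j \<in> {1..m}" "l \<in> {1..m}" "j \<noteq> l"
  shows "cexp (y j) \<noteq> cexp (y l)" "cexp (y j) * cexp (y l) \<noteq> 1"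
proof -
  have "cexp (y j) / cexp (y l) \<noteq> 1" "cexp (y j) * cexp (y l) \<noteq> 1"
    using assms unfolding reg_def cexp_diff[symmetric] cexp_add[symmetric] cexp_eq_1_iff by blast+
  then show "cexp (y j) \<noteq> cexp (y l)" "cexp (y j) * cexp (y l) \<noteq> 1"
    by (metis cexp_neq_0 divide_self)+
qed

lemma reg_signed_pair:
  assumes "reg m \<xi>" "s \<in> {1..m}" "t \<in> {1..m}" "s \<noteq> t" "a = 1 \<or> a = -1" "b = 1 \<or> b = -1"
  shows "a * \<xi> s + b * \<xi> t \<noteq> 2 * pi * of_int k"
proof -
  have pairs: "\<forall>j\<in>{1..m}. \<forall>l\<in>{1..m}. j \<noteq> l \<longrightarrow> (\<forall>k::int.
      \<xi> j - \<xi> l \<noteq> 2 * pi * of_int k \<and> \<xi> j + \<xi> l \<noteq> 2 * pi * of_int k)"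
    using assms(1) unfolding reg_def by (rule conjunct2)
  have "\<xi> s - \<xi> t \<noteq> 2 * pi * of_int k'" "\<xi> t - \<xi> s \<noteq> 2 * pi * of_int k'"
    "\<xi> s + \<xi> t \<noteq> 2 * pi * of_int k'" for k' :: int
    using pairs[rule_format, OF assms(2,3,4)] pairs[rule_format, OF assms(3,2) assms(4)[symmetric]] by auto
  from this[of k] this[of "- k"] show ?thesis
    using assms(5,6) by (elim disjE) (simp_all add: algebra_simps)
qed

section \<open>Factorisation of the coefficient C\<close>

definition two_body :: "real \<Rightarrow> real \<Rightarrow> complex" where
  "two_body q t = (1 - q * cexp (- t)) / (1 - cexp (- t))"

definition boundary_factor :: "real \<Rightarrow> real \<Rightarrow> real \<Rightarrow> complex" where
  "boundary_factor ap bp t = (1 - bp * cexp (- t) + ap * cexp (- 2 * t)) / (1 - cexp (- 2 * t))"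

definition pair_factor :: "real \<Rightarrow> real \<Rightarrow> real \<Rightarrow> complex" where
  "pair_factor q a b = two_body q (a - b) * two_body q (a + b)"

definition boundary_prod :: "real \<Rightarrow> real \<Rightarrow> nat \<Rightarrow> (nat \<Rightarrow> real) \<Rightarrow> complex" where
  "boundary_prod ap bp m x = (\<Prod>j=1..m. boundary_factor ap bp (x j))"

definition pair_prod :: "real \<Rightarrow> nat \<Rightarrow> (nat \<Rightarrow> real) \<Rightarrow> complex" where
  "pair_prod q m x = (\<Prod>j=1..m. \<Prod>k=Suc j..m. pair_factor q (x j) (x k))"

lemma Cf_eq_boundary_prod_pair_prod: "Cf ap bp q m x = boundary_prod ap bp m x * pair_prod q m x"
  unfolding Cf_def boundary_prod_def pair_prod_def pair_factor_def two_body_def boundary_factor_def by simp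

lemma two_body_eq: "two_body q t = (cexp t - q) / (cexp t - 1)"
proof -
  have "1 - q * inverse (cexp t) = (cexp t - q) / cexp t" "1 - inverse (cexp t) = (cexp t - 1) / cexp t"
    by (simp_all add: field_simps)
  then show ?thesis unfolding two_body_def cexp_minus by simp
qed

lemma two_body_minus: "two_body q (- t) = (1 - q * cexp t) / (1 - cexp t)"
  unfolding two_body_def by simp

lemma boundary_factor_eq: "boundary_factor ap bp t = (cexp t ^ 2 - bp * cexp t + ap) / (cexp t ^ 2 - 1)"
proof -
  have "- 2 * t = 2 * (- t)" by simp
  then have "cexp (- 2 * t) = inverse (cexp t) ^ 2" by (simp only: cexp_double cexp_minus)
  moreover have "1 - bp * inverse (cexp t) + ap * inverse (cexp t) ^ 2 = (cexp t ^ 2 - bp * cexp t + ap) / cexp t ^ 2"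
    "1 - inverse (cexp t) ^ 2 = (cexp t ^ 2 - 1) / cexp t ^ 2"
    by (simp_all add: field_simps power2_eq_square)
  ultimately show ?thesis unfolding boundary_factor_def cexp_minus by simp
qed

lemma boundary_factor_minus: "boundary_factor ap bp (- t) = (1 - bp * cexp t + ap * cexp t ^ 2) / (1 - cexp t ^ 2)"
proof -
  have "- 2 * (- t) = 2 * t" by simp
  then show ?thesis unfolding boundary_factor_def by (simp only: minus_minus cexp_double)
qed

lemma boundary_prod_permute: "t permutes {1..m} \<Longrightarrow> boundary_prod ap bp m (x \<circ> t) = boundary_prod ap bp m x"
  unfolding boundary_prod_def using prod.permute[of t "{1..m}" "\<lambda>j. boundary_factor ap bp (x j)"] by (simp add: comp_def)

lemma boundary_prod_upd:
  "r \<in> {1..m} \<Longrightarrow> boundary_prod ap bp m (x(r := c)) = boundary_factor ap bp c * (\<Prod>j\<in>{1..m}-{r}. boundary_factor ap bp (x j))"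
  unfolding boundary_prod_def by (subst prod.remove[of _ r]) auto

lemma boundary_prod_remove:
  "r \<in> {1..m} \<Longrightarrow> boundary_prod ap bp m x = boundary_factor ap bp (x r) * (\<Prod>j\<in>{1..m}-{r}. boundary_factor ap bp (x j))"
  using boundary_prod_upd[of r m ap bp x "x r"] by simp

abbreviation adj_swap :: "nat \<Rightarrow> nat \<Rightarrow> nat" where
  "adj_swap p \<equiv> Transposition.transpose p (Suc p)"

lemma adj_swap_permutes: "1 \<le> p \<Longrightarrow> Suc p \<le> m \<Longrightarrow> adj_swap p permutes {1..m}"
  by (rule permutes_swap_id) auto

definition pair_indices :: "nat \<Rightarrow> (nat \<times> nat) set" where
  "pair_indices m = (SIGMA j:{1..m}. {Suc j..m})"

lemma pair_prod_eq_prod_pair_indices: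
  "pair_prod q m x = (\<Prod>(j, k)\<in>pair_indices m. pair_factor q (x j) (x k))"
  unfolding pair_prod_def pair_indices_def by (rule prod.Sigma) auto

lemma adj_swap_pair_indices:
  assumes "1 \<le> p" "Suc p \<le> m" "jk \<in> pair_indices m - {(p, Suc p)}"
  shows "(adj_swap p (fst jk), adj_swap p (snd jk)) \<in> pair_indices m - {(p, Suc p)}"
  using assms unfolding pair_indices_def Transposition.transpose_def
  by (cases jk) (auto split: if_splits)

lemma pair_prod_adj_swap:
  assumes "1 \<le> p" "Suc p \<le> m"
  shows "pair_prod q m (x \<circ> adj_swap p) * two_body q (x p - x (Suc p))
       = pair_prod q m x * two_body q (x (Suc p) - x p)"
proof -
  define P where "P = pair_indices m - {(p, Suc p)}"
  have mem: "(p, Suc p) \<in> pair_indices m" using assms unfolding pair_indices_def by auto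
  have fin: "finite (pair_indices m)" unfolding pair_indices_def by auto
  have closed: "(adj_swap p j, adj_swap p k) \<in> P" if "(j, k) \<in> P" for j k
    using adj_swap_pair_indices[OF assms, of "(j, k)"] that unfolding P_def by simp
  have rest: "(\<Prod>(j, k)\<in>P. pair_factor q (x (adj_swap p j)) (x (adj_swap p k)))
      = (\<Prod>(j, k)\<in>P. pair_factor q (x j) (x k))"
    by (rule prod.reindex_bij_witness[where i="\<lambda>(j, k). (adj_swap p j, adj_swap p k)"
          and j="\<lambda>(j, k). (adj_swap p j, adj_swap p k)"]) (auto intro: closed)
  have "pair_prod q m x = pair_factor q (x p) (x (Suc p)) * (\<Prod>(j, k)\<in>P. pair_factor q (x j) (x k))"
    unfolding pair_prod_eq_prod_pair_indices P_def
    using prod.remove[OF fin mem, of "\<lambda>(j, k). pair_factor q (x j) (x k)"] by simp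
  moreover have "pair_prod q m (x \<circ> adj_swap p)
      = pair_factor q (x (Suc p)) (x p) * (\<Prod>(j, k)\<in>P. pair_factor q (x j) (x k))"
    unfolding pair_prod_eq_prod_pair_indices P_def rest[unfolded P_def, symmetric]
    using prod.remove[OF fin mem, of "\<lambda>(j, k). pair_factor q ((x \<circ> adj_swap p) j) ((x \<circ> adj_swap p) k)"]
    by simp
  ultimately show ?thesis unfolding pair_factor_def by (simp add: add.commute mult_ac)
qed

lemma pair_prod_flip_last:
  "pair_prod q m (x(m := - x m)) = pair_prod q m x"
  unfolding pair_prod_def
proof (intro prod.cong refl)
  fix j k assume "j \<in> {1..m}" "k \<in> {Suc j..m}"
  then show "pair_factor q ((x(m := - x m)) j) ((x(m := - x m)) k) = pair_factor q (x j) (x k)"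
    by (cases "k = m") (simp_all add: pair_factor_def mult.commute)
qed

lemma pair_prod_split_first:
  assumes "1 \<le> m"
  shows "pair_prod q m x = (\<Prod>k=2..m. pair_factor q (x 1) (x k))
      * (\<Prod>j=2..m. \<Prod>k=Suc j..m. pair_factor q (x j) (x k))"
  unfolding pair_prod_def using prod.atLeast_Suc_atMost[OF assms] by (simp add: numeral_2_eq_2)

section \<open>The hyperoctahedral sum\<close>

definition hyperoct :: "nat \<Rightarrow> ((nat \<Rightarrow> nat) \<times> (nat \<Rightarrow> real)) set" where
  "hyperoct m = {\<sigma>. \<sigma> permutes {1..m}} \<times> signs m"

definition signed_perm :: "(nat \<Rightarrow> real) \<Rightarrow> (nat \<Rightarrow> nat) \<times> (nat \<Rightarrow> real) \<Rightarrow> nat \<Rightarrow> real" where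
  "signed_perm \<xi> w = (\<lambda>j. snd w j * \<xi> (fst w j))"

lemma hyperoctD:
  assumes "w \<in> hyperoct m"
  shows "fst w permutes {1..m}" "\<And>j. j \<in> {1..m} \<Longrightarrow> snd w j = 1 \<or> snd w j = -1"
    "\<And>j. j \<notin> {1..m} \<Longrightarrow> snd w j = 1"
  using assms unfolding hyperoct_def signs_def by auto

lemma reg_signed_perm:
  assumes "reg m \<xi>" "w \<in> hyperoct m"
  shows "reg m (signed_perm \<xi> w)"
proof -
  have perm: "fst w permutes {1..m}" and sign: "\<And>j. j \<in> {1..m} \<Longrightarrow> snd w j = 1 \<or> snd w j = -1"
    using hyperoctD[OF assms(2)] by auto
  have img: "\<And>j. j \<in> {1..m} \<Longrightarrow> fst w j \<in> {1..m}" using permutes_in_image[OF perm] by simp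
  have inj: "\<And>j l. j \<noteq> l \<Longrightarrow> fst w j \<noteq> fst w l" using permutes_inj[OF perm] by (meson injD)
  have single: "2 * signed_perm \<xi> w j \<noteq> 2 * pi * of_int k" if "j \<in> {1..m}" for j k
  proof -
    have "2 * \<xi> (fst w j) \<noteq> 2 * pi * of_int k'" for k' :: int
      using assms(1) img[OF that] unfolding reg_def by blast
    from this[of k] this[of "- k"] show ?thesis
      using sign[OF that] by (auto simp: signed_perm_def)
  qed
  have pair: "signed_perm \<xi> w j - signed_perm \<xi> w l \<noteq> 2 * pi * of_int k"
    "signed_perm \<xi> w j + signed_perm \<xi> w l \<noteq> 2 * pi * of_int k"
    if "j \<in> {1..m}" "l \<in> {1..m}" "j \<noteq> l" for j l k
  proof -
    have "- snd w l = 1 \<or> - snd w l = -1" using sign[OF that(2)] by auto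
    from reg_signed_pair[OF assms(1) img[OF that(1)] img[OF that(2)] inj[OF that(3)] sign[OF that(1)] this]
      reg_signed_pair[OF assms(1) img[OF that(1)] img[OF that(2)] inj[OF that(3)] sign[OF that(1)] sign[OF that(2)]]
    show "signed_perm \<xi> w j - signed_perm \<xi> w l \<noteq> 2 * pi * of_int k"
      "signed_perm \<xi> w j + signed_perm \<xi> w l \<noteq> 2 * pi * of_int k"
      by (simp_all add: signed_perm_def)
  qed
  show ?thesis unfolding reg_def using single pair by blast
qed

definition plane_wave :: "nat \<Rightarrow> (nat \<Rightarrow> real) \<Rightarrow> (nat \<Rightarrow> int) \<Rightarrow> complex" where
  "plane_wave m y la = exp (\<i> * complex_of_real (\<Sum>j=1..m. y j * of_int (la j)))"

lemma plane_wave_shift: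
  assumes "r \<in> {1..m}"
  shows "plane_wave m y (\<lambda>j. la j + (if j = r then c else 0)) = plane_wave m y la * cexp (of_int c * y r)"
proof -
  have "(\<Sum>j=1..m. y j * of_int (la j + (if j = r then c else 0)))
      = (\<Sum>j=1..m. y j * of_int (la j)) + of_int c * y r"
  proof -
    have "y j * of_int (la j + (if j = r then c else 0)) = y j * of_int (la j) + (if j = r then of_int c * y r else 0)"
      for j by (simp add: algebra_simps)
    then show ?thesis using assms by (simp add: sum.distrib)
  qed
  then show ?thesis unfolding plane_wave_def cexp_def by (simp add: distrib_left exp_add)
qed

lemma plane_wave_plusu: "r \<in> {1..m} \<Longrightarrow> plane_wave m y (plusu la r) = plane_wave m y la * cexp (y r)"
  using plane_wave_shift[of r m y la 1] unfolding plusu_def by simp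

lemma plane_wave_minusu:
  assumes "r \<in> {1..m}"
  shows "plane_wave m y (minusu la r) = plane_wave m y la * cexp (- y r)"
proof -
  have "minusu la r = (\<lambda>j. la j + (if j = r then - 1 else 0))" by (auto simp: minusu_def)
  then show ?thesis using plane_wave_shift[OF assms, of y la "- 1"] by simp
qed

lemma plane_wave_adj_swap:
  assumes "1 \<le> p" "Suc p \<le> m" "la p = la (Suc p)"
  shows "plane_wave m (y \<circ> adj_swap p) la = plane_wave m y la"
proof -
  have "la (adj_swap p j) = la j" for j using assms(3) by (simp add: Transposition.transpose_def)
  then have "(\<Sum>j=1..m. (y \<circ> adj_swap p) j * of_int (la j))
      = (\<Sum>j=1..m. ((\<lambda>j. y j * of_int (la j)) \<circ> adj_swap p) j)" by simp
  also have "\<dots> = (\<Sum>j=1..m. y j * of_int (la j))"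
    by (rule sum.permute[OF adj_swap_permutes[OF assms(1,2)], symmetric])
  finally show ?thesis unfolding plane_wave_def by simp
qed

lemma plane_wave_upd_zero:
  "la r = 0 \<Longrightarrow> plane_wave m (y(r := c)) la = plane_wave m y la"
  unfolding plane_wave_def by (rule arg_cong[where f = exp], intro arg_cong[where f = "\<lambda>s. \<i> * of_real s"] sum.cong) auto

lemma plane_wave_flip_first:
  assumes "la 1 = int n" "1 \<le> m"
  shows "plane_wave m (y(1 := - y 1)) la = plane_wave m y la * inverse (cexp (y 1)) ^ (2 * n)"
proof -
  have "(y(1 := - y 1)) j * of_int (la j) = y j * of_int (la j) + (if j = 1 then real (2 * n) * (- y 1) else 0)"
    for j using assms(1) by auto
  then have sum: "(\<Sum>j=1..m. (y(1 := - y 1)) j * of_int (la j))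
      = (\<Sum>j=1..m. y j * of_int (la j)) + real (2 * n) * (- y 1)"
    using assms(2) by (simp add: sum.distrib)
  have "plane_wave m (y(1 := - y 1)) la
      = exp (\<i> * complex_of_real (\<Sum>j=1..m. y j * of_int (la j)) + \<i> * complex_of_real (real (2 * n) * (- y 1)))"
    unfolding plane_wave_def sum by (rule arg_cong[where f = exp]) (simp add: algebra_simps)
  also have "\<dots> = plane_wave m y la * cexp (real (2 * n) * (- y 1))"
    unfolding plane_wave_def cexp_def by (simp only: exp_add)
  finally show ?thesis by (simp only: cexp_of_nat_mult cexp_minus)
qed

definition swap_coords :: "nat \<Rightarrow> (nat \<Rightarrow> nat) \<times> (nat \<Rightarrow> real) \<Rightarrow> (nat \<Rightarrow> nat) \<times> (nat \<Rightarrow> real)" where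
  "swap_coords p w = (fst w \<circ> adj_swap p, snd w \<circ> adj_swap p)"

definition flip_sign :: "nat \<Rightarrow> (nat \<Rightarrow> nat) \<times> (nat \<Rightarrow> real) \<Rightarrow> (nat \<Rightarrow> nat) \<times> (nat \<Rightarrow> real)" where
  "flip_sign r w = (fst w, (snd w)(r := - snd w r))"

lemma swap_coords_swap_coords [simp]: "swap_coords p (swap_coords p w) = w"
  by (simp add: swap_coords_def comp_assoc)

lemma flip_sign_flip_sign [simp]: "flip_sign r (flip_sign r w) = w"
  by (simp add: flip_sign_def)

lemma signed_perm_swap_coords: "signed_perm \<xi> (swap_coords p w) = signed_perm \<xi> w \<circ> adj_swap p"
  by (simp add: signed_perm_def swap_coords_def fun_eq_iff)

lemma signed_perm_flip_sign: "signed_perm \<xi> (flip_sign r w) = (signed_perm \<xi> w)(r := - signed_perm \<xi> w r)"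
  by (simp add: signed_perm_def flip_sign_def fun_eq_iff)

lemma swap_coords_in_hyperoct:
  assumes "w \<in> hyperoct m" "1 \<le> p" "Suc p \<le> m"
  shows "swap_coords p w \<in> hyperoct m"
proof -
  have tp: "adj_swap p permutes {1..m}" using adj_swap_permutes[OF assms(2,3)] .
  have "fst w \<circ> adj_swap p permutes {1..m}" using permutes_compose[OF tp hyperoctD(1)[OF assms(1)]] .
  moreover have "snd w \<circ> adj_swap p \<in> signs m"
  proof -
    have "\<forall>j\<in>{1..m}. (snd w \<circ> adj_swap p) j = 1 \<or> (snd w \<circ> adj_swap p) j = -1"
      using hyperoctD(2)[OF assms(1)] permutes_in_image[OF tp] by auto
    moreover have "\<forall>j. j \<notin> {1..m} \<longrightarrow> (snd w \<circ> adj_swap p) j = 1"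
      using hyperoctD(3)[OF assms(1)] permutes_not_in[OF tp] by auto
    ultimately show ?thesis unfolding signs_def by blast
  qed
  ultimately show ?thesis unfolding hyperoct_def swap_coords_def by simp
qed

lemma flip_sign_in_hyperoct:
  assumes "w \<in> hyperoct m" "r \<in> {1..m}"
  shows "flip_sign r w \<in> hyperoct m"
proof -
  have "(snd w)(r := - snd w r) \<in> signs m"
    using hyperoctD(2,3)[OF assms(1)] assms(2) unfolding signs_def by auto
  then show ?thesis using assms(1) unfolding hyperoct_def flip_sign_def by (simp add: mem_Times_iff)
qed

lemma HLR_eq_sum_hyperoct:
  "HLR ap bp q m la \<xi> = (\<Sum>w\<in>hyperoct m. Cf ap bp q m (signed_perm \<xi> w) * plane_wave m (signed_perm \<xi> w) la)"
  unfolding HLR_def hyperoct_def plane_wave_def signed_perm_def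
  by (simp add: sum.cartesian_product case_prod_unfold)

lemma sum_eq_0_if_sign_reversing_involution:
  fixes t :: "'a \<Rightarrow> 'b::field_char_0"
  assumes "\<And>x. x \<in> A \<Longrightarrow> g x \<in> A" "\<And>x. x \<in> A \<Longrightarrow> g (g x) = x" "\<And>x. x \<in> A \<Longrightarrow> t (g x) = - t x"
  shows "sum t A = 0"
proof -
  have "sum t A = sum (\<lambda>x. t (g x)) A"
    by (rule sum.reindex_bij_witness[where i = g and j = g]) (use assms in auto)
  also have "\<dots> = - sum t A" using assms(3) by (simp add: sum_negf)
  finally show ?thesis by simp
qed

section \<open>Exchange and boundary relations\<close>

lemma Cf_adj_swap:
  assumes "reg m y" "1 \<le> p" "Suc p \<le> m"
  shows "Cf ap bp q m (y \<circ> adj_swap p) * (cexp (y p) - q * cexp (y (Suc p)))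
       = - (Cf ap bp q m y * (cexp (y (Suc p)) - q * cexp (y p)))"
proof -
  define a b where "a = cexp (y p)" and "b = cexp (y (Suc p))"
  have "a \<noteq> b" unfolding a_def b_def using reg_cexp_neq(1)[OF assms(1), of p "Suc p"] assms by auto
  then have ab: "a - b \<noteq> 0" "b - a \<noteq> 0" "a \<noteq> 0" "b \<noteq> 0" by (auto simp: a_def b_def)
  have "two_body q (y p - y (Suc p)) = (a - q * b) / (a - b)"
    "two_body q (y (Suc p) - y p) = (b - q * a) / (b - a)"
    unfolding two_body_eq cexp_diff a_def[symmetric] b_def[symmetric] using ab by (simp_all add: field_simps)
  then have swap: "pair_prod q m (y \<circ> adj_swap p) * ((a - q * b) / (a - b)) = pair_prod q m y * ((b - q * a) / (b - a))"
    using pair_prod_adj_swap[OF assms(2,3), of q y] by simp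
  have "pair_prod q m (y \<circ> adj_swap p) * (a - q * b) = pair_prod q m (y \<circ> adj_swap p) * ((a - q * b) / (a - b)) * (a - b)"
    using ab by simp
  also have "\<dots> = - (pair_prod q m y * (b - q * a))"
    unfolding swap using ab by (simp add: field_simps)
  finally show ?thesis
    unfolding Cf_eq_boundary_prod_pair_prod boundary_prod_permute[OF adj_swap_permutes[OF assms(2,3)]]
      a_def[symmetric] b_def[symmetric] by (simp add: mult.assoc)
qed

lemma boundary_factor_minus_mult:
  assumes "cexp t ^ 2 \<noteq> 1"
  shows "boundary_factor ap bp (- t) * (cexp t - bp + ap * inverse (cexp t))
       = - (boundary_factor ap bp t * (inverse (cexp t) - bp + ap * cexp t))"
proof -
  define z where "z = cexp t"
  have nz: "z \<noteq> 0" "1 - z ^ 2 \<noteq> 0" "z ^ 2 - 1 \<noteq> 0" using assms unfolding z_def by auto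
  have "boundary_factor ap bp (- t) * (z - bp + ap * inverse z) = (1 - bp * z + ap * z ^ 2) * (z ^ 2 - bp * z + ap) / (z * (1 - z ^ 2))"
    unfolding boundary_factor_minus z_def[symmetric] using nz by (simp add: field_simps power2_eq_square)
  also have "\<dots> = - (boundary_factor ap bp t * (inverse z - bp + ap * z))"
    unfolding boundary_factor_eq z_def[symmetric] using nz by (simp add: field_simps power2_eq_square)
  finally show ?thesis unfolding z_def .
qed

lemma Cf_flip_last:
  assumes "reg m y" "1 \<le> m"
  shows "Cf ap bp q m (y(m := - y m)) * (cexp (y m) - bp + ap * inverse (cexp (y m)))
       = - (Cf ap bp q m y * (inverse (cexp (y m)) - bp + ap * cexp (y m)))"
proof -
  have m: "m \<in> {1..m}" using assms(2) by auto
  define R where "R = (\<Prod>j\<in>{1..m}-{m}. boundary_factor ap bp (y j)) * pair_prod q m y"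
  have "Cf ap bp q m (y(m := - y m)) * (cexp (y m) - bp + ap * inverse (cexp (y m)))
      = boundary_factor ap bp (- y m) * (cexp (y m) - bp + ap * inverse (cexp (y m))) * R"
    unfolding Cf_eq_boundary_prod_pair_prod boundary_prod_upd[OF m] pair_prod_flip_last R_def by (simp add: mult_ac)
  also have "\<dots> = - (boundary_factor ap bp (y m) * (inverse (cexp (y m)) - bp + ap * cexp (y m))) * R"
    using boundary_factor_minus_mult reg_cexp_power2_neq_1[OF assms(1) m] by metis
  also have "\<dots> = - (Cf ap bp q m y * (inverse (cexp (y m)) - bp + ap * cexp (y m)))"
    unfolding Cf_eq_boundary_prod_pair_prod boundary_prod_remove[OF m] R_def by (simp add: mult_ac)
  finally show ?thesis .
qed

definition boundary_ratio :: "real \<Rightarrow> real \<Rightarrow> complex \<Rightarrow> complex" where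
  "boundary_ratio a b z = (1 - b * z + a * z ^ 2) / (z ^ 2 - b * z + a)"

definition scattering_ratio :: "real \<Rightarrow> complex \<Rightarrow> complex \<Rightarrow> complex" where
  "scattering_ratio q z v = ((1 - q * (z / v)) * (1 - q * (z * v))) / ((z / v - q) * (z * v - q))"

lemma boundary_ratio_inverse: "z \<noteq> 0 \<Longrightarrow> boundary_ratio a b (inverse z) = inverse (boundary_ratio a b z)"
proof -
  assume "z \<noteq> 0"
  then have "1 - b * inverse z + a * inverse z ^ 2 = (z ^ 2 - b * z + a) / z ^ 2"
    "inverse z ^ 2 - b * inverse z + a = (1 - b * z + a * z ^ 2) / z ^ 2"
    by (simp_all add: field_simps power2_eq_square)
  with \<open>z \<noteq> 0\<close> show ?thesis unfolding boundary_ratio_def by simp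
qed

lemma scattering_ratio_inverse_right: "v \<noteq> 0 \<Longrightarrow> scattering_ratio q z (inverse v) = scattering_ratio q z v"
  unfolding scattering_ratio_def by (simp add: field_simps mult_ac)

lemma scattering_ratio_inverse_left:
  assumes "z \<noteq> 0" "v \<noteq> 0"
  shows "scattering_ratio q (inverse z) v = inverse (scattering_ratio q z v)"
proof -
  have "1 - q * (z / v) = (v - q * z) / v" "z / v - q = (z - q * v) / v"
    "1 - q * (inverse z / v) = (z * v - q) / (z * v)" "1 - q * (inverse z * v) = (z - q * v) / z"
    "inverse z / v - q = (1 - q * (z * v)) / (z * v)" "inverse z * v - q = (v - q * z) / z"
    using assms by (simp_all add: field_simps)
  with assms show ?thesis unfolding scattering_ratio_def by (simp add: mult_ac)
qed

lemma norm_1_diff_neq_0: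
  fixes u :: complex and c :: real
  assumes "norm u = 1" "\<bar>c\<bar> < 1"
  shows "1 - c * u \<noteq> 0" "u - c \<noteq> 0"
proof
  assume "1 - c * u = 0"
  then have "norm (complex_of_real c * u) = 1" by (metis eq_iff_diff_eq_0 norm_one)
  then show False using assms by (simp add: norm_mult)
next
  show "u - c \<noteq> 0"
  proof
    assume "u - c = 0"
    then have "norm (complex_of_real c) = 1" using assms(1) by simp
    then show False using assms by simp
  qed
qed

lemma boundary_ratio_terms_neq_0:
  fixes z :: complex and p r :: real
  assumes "norm z = 1" "\<bar>p\<bar> < 1" "\<bar>r\<bar> < 1"
  shows "1 - (p + r) * z + (p * r) * z ^ 2 \<noteq> 0" "z ^ 2 - (p + r) * z + (p * r) \<noteq> 0"
proof -
  have "1 - (p + r) * z + (p * r) * z ^ 2 = (1 - p * z) * (1 - r * z)"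
    "z ^ 2 - (p + r) * z + (p * r) = (z - p) * (z - r)"
    by (simp_all add: algebra_simps power2_eq_square)
  then show "1 - (p + r) * z + (p * r) * z ^ 2 \<noteq> 0" "z ^ 2 - (p + r) * z + (p * r) \<noteq> 0"
    using norm_1_diff_neq_0[OF assms(1,2)] norm_1_diff_neq_0[OF assms(1,3)] by simp_all
qed

lemma pair_factor_minus:
  assumes "cexp (a + b) \<noteq> 1" "cexp (a - b) \<noteq> 1" "\<bar>q\<bar> < 1"
  shows "pair_factor q (- a) b = pair_factor q a b * scattering_ratio q (cexp a) (cexp b)"
proof -
  define u v where "u = cexp (a - b)" and "v = cexp (a + b)"
  have nz: "1 - u \<noteq> 0" "1 - v \<noteq> 0" "u - 1 \<noteq> 0" "v - 1 \<noteq> 0" "u - q \<noteq> 0" "v - q \<noteq> 0"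
    using assms norm_1_diff_neq_0(2)[OF norm_cexp assms(3)] unfolding u_def v_def by auto
  have sign: "- a - b = - (a + b)" "- a + b = - (a - b)" by auto
  have "pair_factor q (- a) b = (1 - q * v) / (1 - v) * ((1 - q * u) / (1 - u))"
    unfolding pair_factor_def sign two_body_minus u_def v_def by (simp add: mult.commute)
  also have "\<dots> = ((1 - q * u) * (1 - q * v)) / ((u - 1) * (v - 1))"
    using nz by (simp add: field_simps)
  also have "\<dots> = ((u - q) * (v - q) * ((1 - q * u) * (1 - q * v))) / ((u - 1) * (v - 1) * ((u - q) * (v - q)))"
    using nz by (simp add: mult.commute mult.left_commute)
  also have "\<dots> = (u - q) / (u - 1) * ((v - q) / (v - 1)) * (((1 - q * u) * (1 - q * v)) / ((u - q) * (v - q)))"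
    by simp
  also have "\<dots> = pair_factor q a b * scattering_ratio q (cexp a) (cexp b)"
    unfolding pair_factor_def two_body_eq scattering_ratio_def u_def v_def cexp_add cexp_diff by simp
  finally show ?thesis .
qed

lemma pair_prod_flip_first:
  assumes "reg m y" "1 \<le> m" "\<bar>q\<bar> < 1"
  shows "pair_prod q m (y(1 := - y 1))
       = pair_prod q m y * (\<Prod>k=2..m. scattering_ratio q (cexp (y 1)) (cexp (y k)))"
proof -
  have 1: "1 \<in> {1..m}" using assms(2) by auto
  have "pair_factor q (- y 1) (y k) = pair_factor q (y 1) (y k) * scattering_ratio q (cexp (y 1)) (cexp (y k))"
    if "k \<in> {2..m}" for k
  proof (rule pair_factor_minus[OF _ _ assms(3)])
    have k: "k \<in> {1..m}" "1 \<noteq> k" using that by auto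
    show "cexp (y 1 + y k) \<noteq> 1" unfolding cexp_add using reg_cexp_neq(2)[OF assms(1) 1 k] .
    show "cexp (y 1 - y k) \<noteq> 1" unfolding cexp_diff using reg_cexp_neq(1)[OF assms(1) 1 k] by simp
  qed
  then have "(\<Prod>k=2..m. pair_factor q (- y 1) (y k))
      = (\<Prod>k=2..m. pair_factor q (y 1) (y k)) * (\<Prod>k=2..m. scattering_ratio q (cexp (y 1)) (cexp (y k)))"
    by (simp add: prod.distrib)
  moreover have "(\<Prod>j=2..m. \<Prod>k=Suc j..m. pair_factor q ((y(1 := c)) j) ((y(1 := c)) k))
      = (\<Prod>j=2..m. \<Prod>k=Suc j..m. pair_factor q (y j) (y k))" for c
    by (intro prod.cong refl) auto
  ultimately show ?thesis
    unfolding pair_prod_split_first[OF assms(2), of q] by (simp add: mult_ac)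
qed

text \<open>The Bethe equation for \<open>z = e^{i y_1}\<close> is exactly what makes the reflected boundary factor
  at the left boundary_factor cancel against the phase \<open>z^{-2n}\<close> picked up by the plane wave.\<close>

lemma boundary_factor_minus_bethe:
  fixes G :: complex
  assumes z2: "cexp t ^ 2 \<noteq> 1"
    and Np: "1 - bp * cexp t + ap * cexp t ^ 2 \<noteq> 0" and Dp: "cexp t ^ 2 - bp * cexp t + ap \<noteq> 0"
    and Nm: "1 - bm * cexp t + am * cexp t ^ 2 \<noteq> 0" and Dm: "cexp t ^ 2 - bm * cexp t + am \<noteq> 0"
    and bethe: "cexp t ^ (2 * n) = boundary_ratio ap bp (cexp t) * boundary_ratio am bm (cexp t) * G"
  shows "boundary_factor ap bp (- t) * G * inverse (cexp t) ^ (2 * n) * (inverse (cexp t) + am * cexp t - bm)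
       = - (boundary_factor ap bp t * (cexp t + am * inverse (cexp t) - bm))"
proof -
  define z where "z = cexp t"
  define N1 D1 N2 D2 where "N1 = 1 - bp * z + ap * z ^ 2" and "D1 = z ^ 2 - bp * z + ap"
    and "N2 = 1 - bm * z + am * z ^ 2" and "D2 = z ^ 2 - bm * z + am"
  define W d where "W = z ^ (2 * n)" and "d = 1 - z ^ 2"
  have nz: "z \<noteq> 0" "d \<noteq> 0" "N1 \<noteq> 0" "D1 \<noteq> 0" "N2 \<noteq> 0" "D2 \<noteq> 0" "W \<noteq> 0"
    using z2 Np Dp Nm Dm unfolding z_def N1_def D1_def N2_def D2_def W_def d_def by auto
  have G: "G = W * D1 * D2 / (N1 * N2)"
    using bethe nz unfolding boundary_ratio_def z_def[symmetric] N1_def[symmetric] D1_def[symmetric]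
      N2_def[symmetric] D2_def[symmetric] W_def[symmetric] by (simp add: field_simps)
  have factors: "boundary_factor ap bp (- t) = N1 / d" "boundary_factor ap bp t = D1 / (- d)"
    unfolding boundary_factor_minus boundary_factor_eq[of ap bp t] z_def[symmetric] N1_def D1_def d_def by simp_all
  have phases: "inverse (cexp t) ^ (2 * n) = inverse W"
    "inverse (cexp t) + am * cexp t - bm = N2 / z" "cexp t + am * inverse (cexp t) - bm = D2 / z"
    using nz unfolding z_def[symmetric] N2_def D2_def W_def by (simp_all add: field_simps power2_eq_square power_inverse)
  show ?thesis unfolding factors phases G using nz by (simp add: field_simps)
qed

lemma Cf_flip_first:
  assumes reg: "reg m y" and m: "1 \<le> m" and q: "\<bar>q\<bar> < 1"
    and Np: "1 - bp * cexp (y 1) + ap * cexp (y 1) ^ 2 \<noteq> 0" and Dp: "cexp (y 1) ^ 2 - bp * cexp (y 1) + ap \<noteq> 0"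
    and Nm: "1 - bm * cexp (y 1) + am * cexp (y 1) ^ 2 \<noteq> 0" and Dm: "cexp (y 1) ^ 2 - bm * cexp (y 1) + am \<noteq> 0"
    and bethe: "cexp (y 1) ^ (2 * n) = boundary_ratio ap bp (cexp (y 1)) * boundary_ratio am bm (cexp (y 1))
              * (\<Prod>k=2..m. scattering_ratio q (cexp (y 1)) (cexp (y k)))"
  shows "Cf ap bp q m (y(1 := - y 1)) * inverse (cexp (y 1)) ^ (2 * n) * (inverse (cexp (y 1)) + am * cexp (y 1) - bm)
       = - (Cf ap bp q m y * (cexp (y 1) + am * inverse (cexp (y 1)) - bm))"
proof -
  have 1: "1 \<in> {1..m}" using m by auto
  define G where "G = (\<Prod>k=2..m. scattering_ratio q (cexp (y 1)) (cexp (y k)))"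
  define R where "R = (\<Prod>j\<in>{1..m}-{1}. boundary_factor ap bp (y j)) * pair_prod q m y"
  have "Cf ap bp q m (y(1 := - y 1)) * inverse (cexp (y 1)) ^ (2 * n) * (inverse (cexp (y 1)) + am * cexp (y 1) - bm)
      = boundary_factor ap bp (- y 1) * G * inverse (cexp (y 1)) ^ (2 * n) * (inverse (cexp (y 1)) + am * cexp (y 1) - bm) * R"
    unfolding Cf_eq_boundary_prod_pair_prod boundary_prod_upd[OF 1] pair_prod_flip_first[OF reg m q] G_def R_def
    by (simp add: mult_ac)
  also have "\<dots> = - (boundary_factor ap bp (y 1) * (cexp (y 1) + am * inverse (cexp (y 1)) - bm)) * R"
    using boundary_factor_minus_bethe[OF reg_cexp_power2_neq_1[OF reg 1] Np Dp Nm Dm bethe[folded G_def]] by simp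
  also have "\<dots> = - (Cf ap bp q m y * (cexp (y 1) + am * inverse (cexp (y 1)) - bm))"
    unfolding Cf_eq_boundary_prod_pair_prod boundary_prod_remove[OF 1] R_def by (simp add: mult_ac)
  finally show ?thesis .
qed

lemma bethe_cexp:
  assumes "bethe ap bp am bm q n m \<xi>" "s \<in> {1..m}"
  shows "cexp (\<xi> s) ^ (2 * n) = boundary_ratio ap bp (cexp (\<xi> s)) * boundary_ratio am bm (cexp (\<xi> s))
           * (\<Prod>k\<in>{1..m}-{s}. scattering_ratio q (cexp (\<xi> s)) (cexp (\<xi> k)))"
proof -
  have "cexp (2 * real n * \<xi> s) = cexp (\<xi> s) ^ (2 * n)"
    using cexp_of_nat_mult[of "2 * n" "\<xi> s"] by (simp add: mult.assoc)
  with assms show ?thesis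
    unfolding bethe_def boundary_ratio_def scattering_ratio_def cexp_double cexp_diff cexp_add by simp
qed

lemma prod_scattering_ratio_signed_perm:
  assumes "w \<in> hyperoct m" "1 \<le> m"
  shows "(\<Prod>k\<in>{1..m}-{fst w 1}. scattering_ratio q z (cexp (\<xi> k)))
       = (\<Prod>k=2..m. scattering_ratio q z (cexp (signed_perm \<xi> w k)))"
proof -
  have perm: "fst w permutes {1..m}" using hyperoctD(1)[OF assms(1)] .
  have "{2..m} = {1..m} - {1}" by auto
  then have img: "fst w ` {2..m} = {1..m} - {fst w 1}"
    using image_set_diff[OF permutes_inj[OF perm]] permutes_image[OF perm] by simp
  have inj: "inj_on (fst w) {2..m}" using permutes_inj[OF perm] by (simp add: inj_on_def inj_def)
  have "scattering_ratio q z (cexp (signed_perm \<xi> w k)) = scattering_ratio q z (cexp (\<xi> (fst w k)))"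
    if "k \<in> {2..m}" for k
  proof -
    have "snd w k = 1 \<or> snd w k = -1" using hyperoctD(2)[OF assms(1)] that by auto
    then show ?thesis unfolding signed_perm_def by (auto simp: cexp_minus scattering_ratio_inverse_right)
  qed
  then have "(\<Prod>k=2..m. scattering_ratio q z (cexp (signed_perm \<xi> w k)))
      = (\<Prod>k=2..m. scattering_ratio q z (cexp (\<xi> (fst w k))))"
    by (rule prod.cong[OF refl])
  also have "\<dots> = (\<Prod>k\<in>{1..m}-{fst w 1}. scattering_ratio q z (cexp (\<xi> k)))"
    unfolding img[symmetric] using prod.reindex[OF inj, of "\<lambda>k. scattering_ratio q z (cexp (\<xi> k))"] by simp
  finally show ?thesis by simp
qed

text \<open>The Bethe equations are invariant under the hyperoctahedral group: permuting is harmless,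
  and the equation for \<open>e^{-i \<xi>_j}\<close> is the inverse of the one for \<open>e^{i \<xi>_j}\<close>.\<close>

lemma bethe_signed_perm:
  assumes "bethe ap bp am bm q n m \<xi>" "w \<in> hyperoct m" "1 \<le> m"
  defines "z \<equiv> cexp (signed_perm \<xi> w 1)"
  shows "z ^ (2 * n) = boundary_ratio ap bp z * boundary_ratio am bm z
           * (\<Prod>k=2..m. scattering_ratio q z (cexp (signed_perm \<xi> w k)))"
proof -
  define G where "G u = (\<Prod>k=2..m. scattering_ratio q u (cexp (signed_perm \<xi> w k)))" for u
  define u where "u = cexp (\<xi> (fst w 1))"
  have "fst w 1 \<in> {1..m}" using permutes_in_image[OF hyperoctD(1)[OF assms(2)]] assms(3) by auto
  from bethe_cexp[OF assms(1) this]
  have bethe_u: "u ^ (2 * n) = boundary_ratio ap bp u * boundary_ratio am bm u * G u"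
    unfolding G_def u_def prod_scattering_ratio_signed_perm[OF assms(2,3)] .
  have "snd w 1 = 1 \<or> snd w 1 = -1" using hyperoctD(2)[OF assms(2)] assms(3) by auto
  then show ?thesis
  proof
    assume "snd w 1 = 1"
    then have "z = u" unfolding z_def u_def signed_perm_def by simp
    then show ?thesis using bethe_u unfolding G_def by simp
  next
    assume "snd w 1 = -1"
    then have zu: "z = inverse u" unfolding z_def u_def signed_perm_def by (simp add: cexp_minus)
    have "G z = inverse (G u)"
      unfolding G_def zu using scattering_ratio_inverse_left[of u] unfolding u_def
      by (simp add: prod_inversef[symmetric] comp_def)
    then show ?thesis
      using bethe_u unfolding zu u_def by (simp add: boundary_ratio_inverse power_inverse G_def)
  qed
qed

lemma HLR_plusu:
  "r \<in> {1..m} \<Longrightarrow> HLR ap bp q m (plusu la r) \<xi> = (\<Sum>w\<in>hyperoct m.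
     Cf ap bp q m (signed_perm \<xi> w) * plane_wave m (signed_perm \<xi> w) la * cexp (signed_perm \<xi> w r))"
  by (simp add: HLR_eq_sum_hyperoct plane_wave_plusu mult.assoc)

lemma HLR_minusu:
  "r \<in> {1..m} \<Longrightarrow> HLR ap bp q m (minusu la r) \<xi> = (\<Sum>w\<in>hyperoct m.
     Cf ap bp q m (signed_perm \<xi> w) * plane_wave m (signed_perm \<xi> w) la * cexp (- signed_perm \<xi> w r))"
  by (simp add: HLR_eq_sum_hyperoct plane_wave_minusu mult.assoc)

lemma HLR_exchange:
  assumes reg: "reg m \<xi>" and p: "1 \<le> p" "Suc p \<le> m" and la: "la p = la (Suc p)"
  shows "HLR ap bp q m (plusu la (Suc p)) \<xi> = q * HLR ap bp q m (plusu la p) \<xi>"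
proof -
  have pm: "p \<in> {1..m}" "Suc p \<in> {1..m}" using p by auto
  define t where "t w = Cf ap bp q m (signed_perm \<xi> w) * plane_wave m (signed_perm \<xi> w) la
      * (cexp (signed_perm \<xi> w (Suc p)) - q * cexp (signed_perm \<xi> w p))" for w
  have "HLR ap bp q m (plusu la (Suc p)) \<xi> - q * HLR ap bp q m (plusu la p) \<xi> = sum t (hyperoct m)"
    unfolding HLR_plusu[OF pm(1)] HLR_plusu[OF pm(2)] t_def sum_distrib_left sum_subtractf[symmetric]
    by (rule sum.cong) (simp_all add: algebra_simps)
  moreover have "sum t (hyperoct m) = 0"
  proof (rule sum_eq_0_if_sign_reversing_involution[where g = "swap_coords p"])
    fix w assume w: "w \<in> hyperoct m"
    show "swap_coords p w \<in> hyperoct m" using swap_coords_in_hyperoct[OF w p] .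
    show "swap_coords p (swap_coords p w) = w" by simp
    define y where "y = signed_perm \<xi> w"
    have "t (swap_coords p w) = Cf ap bp q m (y \<circ> adj_swap p) * (cexp (y p) - q * cexp (y (Suc p)))
        * plane_wave m y la"
      unfolding t_def signed_perm_swap_coords y_def[symmetric] plane_wave_adj_swap[OF p la]
      by (simp add: mult_ac)
    also have "\<dots> = - (Cf ap bp q m y * (cexp (y (Suc p)) - q * cexp (y p))) * plane_wave m y la"
      by (simp only: Cf_adj_swap[OF reg_signed_perm[OF reg w, folded y_def] p])
    also have "\<dots> = - t w" unfolding t_def y_def by (simp add: mult_ac)
    finally show "t (swap_coords p w) = - t w" .
  qed
  ultimately show ?thesis by simp
qed

lemma HLR_boundary_zero:
  assumes reg: "reg m \<xi>" and m: "1 \<le> m" and la: "la m = 0"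
  shows "HLR ap bp q m (minusu la m) \<xi> = bp * HLR ap bp q m la \<xi> - ap * HLR ap bp q m (plusu la m) \<xi>"
proof -
  have mm: "m \<in> {1..m}" using m by auto
  define t where "t w = Cf ap bp q m (signed_perm \<xi> w) * plane_wave m (signed_perm \<xi> w) la
      * (inverse (cexp (signed_perm \<xi> w m)) - bp + ap * cexp (signed_perm \<xi> w m))" for w
  have "HLR ap bp q m (minusu la m) \<xi> - bp * HLR ap bp q m la \<xi> + ap * HLR ap bp q m (plusu la m) \<xi>
      = sum t (hyperoct m)"
    unfolding HLR_plusu[OF mm] HLR_minusu[OF mm] HLR_eq_sum_hyperoct[of _ _ _ _ la] t_def sum_distrib_left
      sum_subtractf[symmetric] sum.distrib[symmetric]
    by (rule sum.cong) (simp_all add: algebra_simps cexp_minus)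
  moreover have "sum t (hyperoct m) = 0"
  proof (rule sum_eq_0_if_sign_reversing_involution[where g = "flip_sign m"])
    fix w assume w: "w \<in> hyperoct m"
    show "flip_sign m w \<in> hyperoct m" using flip_sign_in_hyperoct[OF w mm] .
    show "flip_sign m (flip_sign m w) = w" by simp
    define y where "y = signed_perm \<xi> w"
    have "t (flip_sign m w) = Cf ap bp q m (y(m := - y m)) * (cexp (y m) - bp + ap * inverse (cexp (y m)))
        * plane_wave m y la"
      unfolding t_def signed_perm_flip_sign y_def[symmetric] plane_wave_upd_zero[of la, OF la]
      by (simp add: cexp_minus mult_ac)
    also have "\<dots> = - (Cf ap bp q m y * (inverse (cexp (y m)) - bp + ap * cexp (y m))) * plane_wave m y la"
      by (simp only: Cf_flip_last[OF reg_signed_perm[OF reg w, folded y_def] m])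
    also have "\<dots> = - t w" unfolding t_def y_def by (simp add: mult_ac)
    finally show "t (flip_sign m w) = - t w" .
  qed
  ultimately show ?thesis by (simp add: algebra_simps)
qed

lemma HLR_boundary_n:
  fixes pp qp pm qm :: real
  assumes reg: "reg m \<xi>" and m: "1 \<le> m" and la: "la 1 = int n"
    and bethe: "bethe (pp * qp) (pp + qp) (pm * qm) (pm + qm) q n m \<xi>"
    and bounds: "\<bar>pp\<bar> < 1" "\<bar>qp\<bar> < 1" "\<bar>pm\<bar> < 1" "\<bar>qm\<bar> < 1" "\<bar>q\<bar> < 1"
  shows "HLR (pp * qp) (pp + qp) q m (plusu la 1) \<xi> + (pm * qm) * HLR (pp * qp) (pp + qp) q m (minusu la 1) \<xi>
       = (pm + qm) * HLR (pp * qp) (pp + qp) q m la \<xi>"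
proof -
  have 1: "1 \<in> {1..m}" using m by auto
  define t where "t w = Cf (pp * qp) (pp + qp) q m (signed_perm \<xi> w) * plane_wave m (signed_perm \<xi> w) la
      * (cexp (signed_perm \<xi> w 1) + (pm * qm) * inverse (cexp (signed_perm \<xi> w 1)) - (pm + qm))" for w
  have "HLR (pp * qp) (pp + qp) q m (plusu la 1) \<xi> + (pm * qm) * HLR (pp * qp) (pp + qp) q m (minusu la 1) \<xi>
      - (pm + qm) * HLR (pp * qp) (pp + qp) q m la \<xi> = sum t (hyperoct m)"
    unfolding HLR_plusu[OF 1] HLR_minusu[OF 1] HLR_eq_sum_hyperoct[of _ _ _ _ la] t_def sum_distrib_left
      sum_subtractf[symmetric] sum.distrib[symmetric]
    by (rule sum.cong) (simp_all add: algebra_simps cexp_minus)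
  moreover have "sum t (hyperoct m) = 0"
  proof (rule sum_eq_0_if_sign_reversing_involution[where g = "flip_sign 1"])
    fix w assume w: "w \<in> hyperoct m"
    show "flip_sign 1 w \<in> hyperoct m" using flip_sign_in_hyperoct[OF w 1] .
    show "flip_sign 1 (flip_sign 1 w) = w" by simp
    define y where "y = signed_perm \<xi> w"
    have unit: "norm (cexp (y 1)) = 1" by simp
    have "t (flip_sign 1 w) = Cf (pp * qp) (pp + qp) q m (y(1 := - y 1)) * inverse (cexp (y 1)) ^ (2 * n)
        * (inverse (cexp (y 1)) + (pm * qm) * cexp (y 1) - (pm + qm)) * plane_wave m y la"
      unfolding t_def signed_perm_flip_sign y_def[symmetric] plane_wave_flip_first[where la = la and n = n, OF la m]
      by (simp add: cexp_minus mult_ac)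
    also have "\<dots> = - (Cf (pp * qp) (pp + qp) q m y * (cexp (y 1) + (pm * qm) * inverse (cexp (y 1)) - (pm + qm)))
        * plane_wave m y la"
      by (simp only: Cf_flip_first[OF reg_signed_perm[OF reg w, folded y_def] m bounds(5)
            boundary_ratio_terms_neq_0[OF unit bounds(1,2)] boundary_ratio_terms_neq_0[OF unit bounds(3,4)]
            bethe_signed_perm[OF bethe w m, folded y_def]])
    also have "\<dots> = - t w" unfolding t_def y_def by (simp add: mult_ac)
    finally show "t (flip_sign 1 w) = - t w" .
  qed
  ultimately show ?thesis by (simp add: algebra_simps)
qed

lemma cexp_plus_cexp_minus: "cexp t + cexp (- t) = 2 * complex_of_real (cos t)"
proof -
  have "cos (complex_of_real t) = (cexp t + cexp (- t)) / 2"
    unfolding cos_exp_eq cexp_def by simp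
  then show ?thesis by (simp add: cos_of_real mult.commute)
qed

lemma sum_cos_signed_perm:
  assumes "w \<in> hyperoct m"
  shows "(\<Sum>l=1..m. cos (signed_perm \<xi> w l)) = (\<Sum>j=1..m. cos (\<xi> j))"
proof -
  have "cos (signed_perm \<xi> w l) = cos (\<xi> (fst w l))" if "l \<in> {1..m}" for l
    using hyperoctD(2)[OF assms that] unfolding signed_perm_def by auto
  then have "(\<Sum>l=1..m. cos (signed_perm \<xi> w l)) = (\<Sum>l=1..m. cos (\<xi> (fst w l)))"
    by (rule sum.cong[OF refl])
  also have "\<dots> = (\<Sum>j=1..m. cos (\<xi> j))"
    using sum.permute[OF hyperoctD(1)[OF assms], of "\<lambda>j. cos (\<xi> j)"] by (simp add: comp_def)
  finally show ?thesis .
qed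

lemma HLR_free:
  "(1 - q) * (\<Sum>l=1..m. HLR ap bp q m (plusu la l) \<xi> + HLR ap bp q m (minusu la l) \<xi>)
   = complex_of_real (2 * (1 - q) * (\<Sum>j=1..m. cos (\<xi> j))) * HLR ap bp q m la \<xi>"
proof -
  define T where "T w = Cf ap bp q m (signed_perm \<xi> w) * plane_wave m (signed_perm \<xi> w) la" for w
  have "(\<Sum>l=1..m. HLR ap bp q m (plusu la l) \<xi> + HLR ap bp q m (minusu la l) \<xi>)
      = (\<Sum>l=1..m. \<Sum>w\<in>hyperoct m. T w * (cexp (signed_perm \<xi> w l) + cexp (- signed_perm \<xi> w l)))"
    unfolding sum.distrib[symmetric] T_def
    by (intro sum.cong refl) (simp add: HLR_plusu HLR_minusu sum.distrib[symmetric] algebra_simps)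
  also have "\<dots> = (\<Sum>w\<in>hyperoct m. T w * (\<Sum>l=1..m. cexp (signed_perm \<xi> w l) + cexp (- signed_perm \<xi> w l)))"
    unfolding sum_distrib_left by (rule sum.swap)
  also have "\<dots> = (\<Sum>w\<in>hyperoct m. T w) * (2 * complex_of_real (\<Sum>j=1..m. cos (\<xi> j)))"
    unfolding sum_distrib_right cexp_plus_cexp_minus
    by (intro sum.cong refl) (simp add: sum_cos_signed_perm[simplified] sum_distrib_left[symmetric] flip: of_real_sum)
  finally show ?thesis unfolding HLR_eq_sum_hyperoct T_def by (simp add: algebra_simps)
qed

section \<open>Conjugate partitions\<close>

lemma LamD:
  assumes "\<mu> \<in> Lam n m"
  shows "\<And>i. i < 1 \<or> n < i \<Longrightarrow> \<mu> i = 0" "\<And>i. i \<in> {1..n} \<Longrightarrow> 0 \<le> \<mu> i"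
    "\<And>i. i \<in> {1..n} \<Longrightarrow> \<mu> i \<le> int m" "\<And>i. i \<in> {1..<n} \<Longrightarrow> \<mu> (Suc i) \<le> \<mu> i"
  using assms unfolding Lam_def by auto

lemma decreasing_chain_le:
  fixes f :: "nat \<Rightarrow> 'a::order"
  assumes "\<And>i. a \<le> i \<Longrightarrow> i < b \<Longrightarrow> f (Suc i) \<le> f i" "a \<le> x" "x \<le> y" "y \<le> b"
  shows "f y \<le> f x"
  using assms(3,4)
proof (induction y)
  case 0 then show ?case by simp
next
  case (Suc y)
  show ?case
  proof (cases "x = Suc y")
    case False
    then have "x \<le> y" using Suc.prems by simp
    then have "f y \<le> f x" using Suc by simp
    moreover have "f (Suc y) \<le> f y" using assms(1) \<open>x \<le> y\<close> assms(2) Suc.prems by simp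
    ultimately show ?thesis by (rule order_trans[rotated])
  qed simp
qed

lemma ext_Suc_le:
  assumes "\<mu> \<in> Lam n m" "i < Suc n"
  shows "ext n m \<mu> (Suc i) \<le> ext n m \<mu> i"
proof -
  consider "i = 0" | "1 \<le> i" "i < n" | "i = n" "1 \<le> n" using assms(2) by linarith
  then show ?thesis
  proof cases
    case 1 then show ?thesis using LamD(3)[OF assms(1), of 1] by (cases "n = 0") (auto simp: ext_def)
  next
    case 2 then show ?thesis using LamD(4)[OF assms(1), of i] by (auto simp: ext_def)
  next
    case 3 then show ?thesis using LamD(2)[OF assms(1), of n] by (auto simp: ext_def)
  qed
qed

lemma ext_antimono:
  assumes "\<mu> \<in> Lam n m" "i \<le> j" "j \<le> Suc n"
  shows "ext n m \<mu> j \<le> ext n m \<mu> i"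
  by (rule decreasing_chain_le[of 0 "Suc n"]) (use assms ext_Suc_le in auto)

lemma ext_bounds:
  assumes "\<mu> \<in> Lam n m" "i \<le> Suc n"
  shows "0 \<le> ext n m \<mu> i" "ext n m \<mu> i \<le> int m"
proof -
  have "ext n m \<mu> (Suc n) \<le> ext n m \<mu> i" using ext_antimono[OF assms(1) assms(2)] by simp
  then show "0 \<le> ext n m \<mu> i" by (simp add: ext_def)
  have "ext n m \<mu> i \<le> ext n m \<mu> 0" using ext_antimono[OF assms(1) _ assms(2)] by simp
  then show "ext n m \<mu> i \<le> int m" by (simp add: ext_def)
qed

lemma ext_eq: "i \<in> {1..n} \<Longrightarrow> ext n m \<mu> i = \<mu> i"
  by (auto simp: ext_def)

lemma down_closed_eq_atLeastAtMost_card: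
  fixes S :: "nat set"
  assumes "S \<subseteq> {1..N}" "\<And>x y. x \<in> S \<Longrightarrow> 1 \<le> y \<Longrightarrow> y \<le> x \<Longrightarrow> y \<in> S"
  shows "S = {1..card S}"
proof (cases "S = {}")
  case False
  have fin: "finite S" using assms(1) finite_subset by blast
  have "S = {1..Max S}"
    using assms Max_ge[OF fin] assms(2)[OF Max_in[OF fin False]] by fastforce
  then show ?thesis by (metis card_atLeastAtMost diff_Suc_1)
qed simp

definition conj_part :: "nat \<Rightarrow> nat \<Rightarrow> (nat \<Rightarrow> int) \<Rightarrow> nat \<Rightarrow> int" where
  "conj_part n m \<mu> l = (if l \<in> {1..m} then int (card {v\<in>{1..n}. int l \<le> \<mu> v}) else 0)"

lemma le_conj_part_iff:
  assumes mu: "\<mu> \<in> Lam n m" and l: "l \<in> {1..m}" and i: "i \<le> Suc n"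
  shows "int i \<le> conj_part n m \<mu> l \<longleftrightarrow> int l \<le> ext n m \<mu> i"
proof -
  define S where "S = {v\<in>{1..n}. int l \<le> \<mu> v}"
  have conj: "conj_part n m \<mu> l = int (card S)" unfolding conj_part_def S_def using l by simp
  have "\<mu> x \<le> \<mu> y" if "1 \<le> y" "y \<le> x" "x \<le> n" for x y
    using ext_antimono[OF mu that(2)] that by (simp add: ext_eq)
  then have S: "S = {1..card S}"
    by (intro down_closed_eq_atLeastAtMost_card[of S n]) (auto simp: S_def intro: order_trans)
  consider "i = 0" | "i = Suc n" | "i \<in> {1..n}" using i by force
  then show ?thesis
  proof cases
    case 1
    then show ?thesis using l by (simp add: conj ext_def)
  next
    case 2
    have "card S \<le> card {1..n}" by (rule card_mono) (auto simp: S_def)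
    then show ?thesis using l 2 by (simp add: conj ext_def)
  next
    case 3
    have "int i \<le> conj_part n m \<mu> l \<longleftrightarrow> i \<in> S" using 3 by (subst S) (simp add: conj)
    also have "\<dots> \<longleftrightarrow> int l \<le> ext n m \<mu> i" unfolding S_def using 3 by (simp add: ext_eq)
    finally show ?thesis .
  qed
qed

lemma conj_part_eq:
  assumes mu: "\<mu> \<in> Lam n m" and v: "v \<le> n" and l: "ext n m \<mu> (Suc v) < int l" "int l \<le> ext n m \<mu> v"
  shows "conj_part n m \<mu> l = int v"
proof -
  have lm: "l \<in> {1..m}" using l ext_bounds[OF mu, of v] ext_bounds[OF mu, of "Suc v"] v by auto
  have "int v \<le> conj_part n m \<mu> l" using le_conj_part_iff[OF mu lm, of v] v l by simp
  moreover have "\<not> int (Suc v) \<le> conj_part n m \<mu> l" using le_conj_part_iff[OF mu lm, of "Suc v"] v l by simp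
  ultimately show ?thesis by simp
qed

lemma conj_part_in_Lam:
  assumes mu: "\<mu> \<in> Lam n m"
  shows "conj_part n m \<mu> \<in> Lam m n"
proof -
  have A: "\<forall>i. (i < 1 \<or> m < i) \<longrightarrow> conj_part n m \<mu> i = 0" by (auto simp: conj_part_def)
  have B: "\<forall>i\<in>{1..m}. 0 \<le> conj_part n m \<mu> i \<and> conj_part n m \<mu> i \<le> int n"
  proof
    fix i assume "i \<in> {1..m}"
    have "card {v\<in>{1..n}. int i \<le> \<mu> v} \<le> card {1..n}" by (rule card_mono) auto
    then show "0 \<le> conj_part n m \<mu> i \<and> conj_part n m \<mu> i \<le> int n" by (simp add: conj_part_def)
  qed
  have C: "\<forall>i\<in>{1..<m}. conj_part n m \<mu> (Suc i) \<le> conj_part n m \<mu> i"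
  proof
    fix i assume i: "i \<in> {1..<m}"
    have "card {v\<in>{1..n}. int (Suc i) \<le> \<mu> v} \<le> card {v\<in>{1..n}. int i \<le> \<mu> v}" by (rule card_mono) auto
    then show "conj_part n m \<mu> (Suc i) \<le> conj_part n m \<mu> i" using i by (simp add: conj_part_def)
  qed
  show ?thesis unfolding Lam_def using A B C by blast
qed

lemma card_int_interval:
  fixes a b :: int
  assumes "0 \<le> b" "b \<le> a" "a \<le> int m"
  shows "int (card {j\<in>{1..m}. int j \<le> a \<and> \<not> int j \<le> b}) = a - b"
proof -
  have "{j\<in>{1..m}. int j \<le> a \<and> \<not> int j \<le> b} = {Suc (nat b)..nat a}" using assms by auto
  then show ?thesis using assms by simp
qed

lemma card_conj_part_eq:
  assumes mu: "\<mu> \<in> Lam n m" and i: "i \<in> {0..n}"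
  shows "int (card {j\<in>{1..m}. conj_part n m \<mu> j = int i}) = ext n m \<mu> i - ext n m \<mu> (Suc i)"
proof -
  have "{j\<in>{1..m}. conj_part n m \<mu> j = int i} = {j\<in>{1..m}. int j \<le> ext n m \<mu> i \<and> \<not> int j \<le> ext n m \<mu> (Suc i)}"
  proof (rule Collect_cong)
    fix j
    show "(j \<in> {1..m} \<and> conj_part n m \<mu> j = int i) = (j \<in> {1..m} \<and> int j \<le> ext n m \<mu> i \<and> \<not> int j \<le> ext n m \<mu> (Suc i))"
    proof (cases "j \<in> {1..m}")
      case True
      have "conj_part n m \<mu> j = int i \<longleftrightarrow> int i \<le> conj_part n m \<mu> j \<and> \<not> int (Suc i) \<le> conj_part n m \<mu> j" by auto
      then show ?thesis using le_conj_part_iff[OF mu True, of i] le_conj_part_iff[OF mu True, of "Suc i"] i True by auto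
    qed auto
  qed
  then show ?thesis
    using card_int_interval[OF ext_bounds(1)[OF mu, of "Suc i"] ext_antimono[OF mu, of i "Suc i"] ext_bounds(2)[OF mu, of i]] i
    by simp
qed

lemma Lam_le_iff_le_card:
  assumes "la \<in> Lam m n" "j \<in> {1..m}"
  shows "t \<le> la j \<longleftrightarrow> j \<le> card {k\<in>{1..m}. t \<le> la k}"
proof -
  define T where "T = {k\<in>{1..m}. t \<le> la k}"
  have "la x \<le> la y" if "1 \<le> y" "y \<le> x" "x \<le> m" for x y
    by (rule decreasing_chain_le[of 1 m]) (use assms(1) that in \<open>auto simp: Lam_def\<close>)
  then have "T = {1..card T}"
    by (intro down_closed_eq_atLeastAtMost_card[of T m]) (auto simp: T_def intro: order_trans)
  then have "j \<in> T \<longleftrightarrow> j \<le> card T" using assms(2) by (metis atLeastAtMost_iff)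
  then show ?thesis using assms(2) unfolding T_def by simp
qed

lemma card_ge_eq_ext:
  assumes la: "la \<in> Lam m n"
    and counts: "\<forall>i\<in>{0..n}. int (card {j\<in>{1..m}. la j = int i}) = ext n m \<mu> i - ext n m \<mu> (Suc i)"
    and "i \<le> Suc n"
  shows "int (card {j\<in>{1..m}. int i \<le> la j}) = ext n m \<mu> i"
  using assms(3)
proof (induction i rule: inc_induct)
  case base
  have "{j\<in>{1..m}. int (Suc n) \<le> la j} = {}" using la unfolding Lam_def by force
  then show ?case by (simp add: ext_def)
next
  case (step i)
  have "{j\<in>{1..m}. int i \<le> la j} = {j\<in>{1..m}. int (Suc i) \<le> la j} \<union> {j\<in>{1..m}. la j = int i}" by auto
  then have "card {j\<in>{1..m}. int i \<le> la j} = card {j\<in>{1..m}. int (Suc i) \<le> la j} + card {j\<in>{1..m}. la j = int i}"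
    by (simp add: card_Un_disjoint[symmetric] disjoint_iff)
  then show ?case using step counts by simp
qed

lemma conj_part_unique:
  assumes mu: "\<mu> \<in> Lam n m" and la: "la \<in> Lam m n"
    and counts: "\<forall>i\<in>{0..n}. int (card {j\<in>{1..m}. la j = int i}) = ext n m \<mu> i - ext n m \<mu> (Suc i)"
  shows "la = conj_part n m \<mu>"
proof
  fix j
  show "la j = conj_part n m \<mu> j"
  proof (cases "j \<in> {1..m}")
    case False
    then show ?thesis using LamD(1)[OF la, of j] unfolding conj_part_def by auto
  next
    case True
    have bounds: "0 \<le> la j" "la j \<le> int n" using la True unfolding Lam_def by auto
    have "int v \<le> la j \<longleftrightarrow> int j \<le> \<mu> v" if "v \<in> {1..n}" for v
    proof -
      have "int v \<le> la j \<longleftrightarrow> int j \<le> int (card {k\<in>{1..m}. int v \<le> la k})"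
        using Lam_le_iff_le_card[OF la True] by simp
      also have "\<dots> \<longleftrightarrow> int j \<le> \<mu> v"
        using card_ge_eq_ext[OF la counts, of v] that by (simp add: ext_eq)
      finally show ?thesis .
    qed
    then have "{v\<in>{1..n}. int j \<le> \<mu> v} = {v\<in>{1..n}. int v \<le> la j}" by auto
    also have "\<dots> = {1..nat (la j)}" using bounds by auto
    finally have "{v\<in>{1..n}. int j \<le> \<mu> v} = {1..nat (la j)}" .
    then show ?thesis using True bounds by (simp add: conj_part_def)
  qed
qed

lemma conjp_eq_conj_part:
  assumes mu: "\<mu> \<in> Lam n m"
  shows "conjp n m \<mu> = conj_part n m \<mu>"
  unfolding conjp_def
proof (rule the_equality)
  show "conj_part n m \<mu> \<in> Lam m n \<and> (\<forall>i\<in>{0..n}. int (card {j\<in>{1..m}. conj_part n m \<mu> j = int i}) = ext n m \<mu> i - ext n m \<mu> (Suc i))"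
    using conj_part_in_Lam[OF mu] card_conj_part_eq[OF mu] by blast
next
  fix la assume "la \<in> Lam m n \<and> (\<forall>i\<in>{0..n}. int (card {j\<in>{1..m}. la j = int i}) = ext n m \<mu> i - ext n m \<mu> (Suc i))"
  then show "la = conj_part n m \<mu>" using conj_part_unique[OF mu] by blast
qed

lemma conj_part_plusu:
  assumes i: "i \<in> {1..n}" and b: "0 \<le> \<mu> i" "\<mu> i + 1 \<le> int m"
  shows "conj_part n m (plusu \<mu> i) = plusu (conj_part n m \<mu>) (nat (\<mu> i) + 1)"
proof
  fix l
  define a where "a = nat (\<mu> i) + 1"
  have a: "a \<in> {1..m}" unfolding a_def using b by auto
  show "conj_part n m (plusu \<mu> i) l = plusu (conj_part n m \<mu>) (nat (\<mu> i) + 1) l"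
  proof (cases "l \<in> {1..m}")
    case False
    then have "l \<noteq> a" using a by auto
    then show ?thesis using False unfolding conj_part_def plusu_def a_def by auto
  next
    case True
    define S where "S = {v\<in>{1..n}. int l \<le> \<mu> v}"
    have fS: "finite S" unfolding S_def by auto
    show ?thesis
    proof (cases "l = a")
      case True
      have "{v\<in>{1..n}. int l \<le> plusu \<mu> i v} = insert i S"
        using True i b unfolding S_def plusu_def a_def by auto
      moreover have "i \<notin> S" using True b unfolding S_def a_def by auto
      ultimately show ?thesis using \<open>l \<in> {1..m}\<close> True fS unfolding conj_part_def plusu_def a_def S_def by simp
    next
      case False
      have "{v\<in>{1..n}. int l \<le> plusu \<mu> i v} = S"
        using False b unfolding S_def plusu_def a_def by auto
      then show ?thesis using \<open>l \<in> {1..m}\<close> False unfolding conj_part_def plusu_def a_def S_def by simp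
    qed
  qed
qed

lemma conj_part_minusu:
  assumes i: "i \<in> {1..n}" and b: "1 \<le> \<mu> i" "\<mu> i \<le> int m"
  shows "conj_part n m (minusu \<mu> i) = minusu (conj_part n m \<mu>) (nat (\<mu> i))"
proof
  fix l
  define a where "a = nat (\<mu> i)"
  have a: "a \<in> {1..m}" unfolding a_def using b by auto
  show "conj_part n m (minusu \<mu> i) l = minusu (conj_part n m \<mu>) (nat (\<mu> i)) l"
  proof (cases "l \<in> {1..m}")
    case False
    then have "l \<noteq> a" using a by auto
    then show ?thesis using False unfolding conj_part_def minusu_def a_def by auto
  next
    case True
    define S where "S = {v\<in>{1..n}. int l \<le> \<mu> v}"
    have fS: "finite S" unfolding S_def by auto
    show ?thesis
    proof (cases "l = a")
      case True
      have "{v\<in>{1..n}. int l \<le> minusu \<mu> i v} = S - {i}"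
        using True i b unfolding S_def minusu_def a_def by auto
      moreover have iS: "i \<in> S" using True b i unfolding S_def a_def by auto
      ultimately have c: "card {v\<in>{1..n}. int l \<le> minusu \<mu> i v} = card S - 1" using fS by simp
      have "0 < card S" using iS fS card_gt_0_iff by blast
      then have c1: "1 \<le> card S" by simp
      have "conj_part n m (minusu \<mu> i) l = int (card S) - 1"
        using \<open>l \<in> {1..m}\<close> c c1 unfolding conj_part_def by simp
      then show ?thesis using \<open>l \<in> {1..m}\<close> True unfolding conj_part_def minusu_def a_def S_def by simp
    next
      case False
      have "{v\<in>{1..n}. int l \<le> minusu \<mu> i v} = S"
        using False b unfolding S_def minusu_def a_def by auto
      then show ?thesis using \<open>l \<in> {1..m}\<close> False unfolding conj_part_def minusu_def a_def S_def by simp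
    qed
  qed
qed

lemma plusu_in_Lam:
  assumes mu: "\<mu> \<in> Lam n m" and i: "i \<in> {1..n}" and lt: "ext n m \<mu> i < ext n m \<mu> (i - 1)"
  shows "plusu \<mu> i \<in> Lam n m"
proof -
  have e1: "ext n m \<mu> (i - 1) \<le> int m" using ext_bounds(2)[OF mu, of "i - 1"] i by auto
  have ei: "ext n m \<mu> i = \<mu> i" using i by (simp add: ext_eq)
  have A: "\<forall>k. (k < 1 \<or> n < k) \<longrightarrow> plusu \<mu> i k = 0" using LamD(1)[OF mu] i by (auto simp: plusu_def)
  have B: "\<forall>k\<in>{1..n}. 0 \<le> plusu \<mu> i k \<and> plusu \<mu> i k \<le> int m"
    using LamD(2,3)[OF mu] lt e1 ei by (auto simp: plusu_def)
  have C: "\<forall>k\<in>{1..<n}. plusu \<mu> i (Suc k) \<le> plusu \<mu> i k"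
  proof
    fix k assume k: "k \<in> {1..<n}"
    show "plusu \<mu> i (Suc k) \<le> plusu \<mu> i k"
    proof (cases "Suc k = i")
      case True
      then have "ext n m \<mu> (i - 1) = \<mu> k" using k by (auto simp: ext_def)
      then show ?thesis using True lt ei by (auto simp: plusu_def)
    next
      case False
      then show ?thesis using LamD(4)[OF mu k] by (auto simp: plusu_def)
    qed
  qed
  show ?thesis unfolding Lam_def using A B C by blast
qed

lemma minusu_in_Lam:
  assumes mu: "\<mu> \<in> Lam n m" and i: "i \<in> {1..n}" and lt: "ext n m \<mu> (Suc i) < ext n m \<mu> i"
  shows "minusu \<mu> i \<in> Lam n m"
proof -
  have e1: "0 \<le> ext n m \<mu> (Suc i)" using ext_bounds(1)[OF mu, of "Suc i"] i by auto
  have ei: "ext n m \<mu> i = \<mu> i" using i by (simp add: ext_eq)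
  have A: "\<forall>k. (k < 1 \<or> n < k) \<longrightarrow> minusu \<mu> i k = 0" using LamD(1)[OF mu] i by (auto simp: minusu_def)
  have B: "\<forall>k\<in>{1..n}. 0 \<le> minusu \<mu> i k \<and> minusu \<mu> i k \<le> int m"
    using LamD(2,3)[OF mu] LamD(3)[OF mu i] lt e1 ei by (auto simp: minusu_def)
  have C: "\<forall>k\<in>{1..<n}. minusu \<mu> i (Suc k) \<le> minusu \<mu> i k"
  proof
    fix k assume k: "k \<in> {1..<n}"
    show "minusu \<mu> i (Suc k) \<le> minusu \<mu> i k"
    proof (cases "k = i")
      case True
      then have "ext n m \<mu> (Suc i) = \<mu> (Suc k)" using k by (auto simp: ext_def)
      then show ?thesis using True lt ei by (auto simp: minusu_def)
    next
      case False
      then show ?thesis using LamD(4)[OF mu k] by (auto simp: minusu_def)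
    qed
  qed
  show ?thesis unfolding Lam_def using A B C by blast
qed


section \<open>Clusters of equal parts\<close>

text \<open>The relation is imposed on all integer vectors, not only on partitions: its lowering form
  below applies it to \<open>\<lambda> - e_p - e_{p+1}\<close>.\<close>

definition exchange_relation :: "nat \<Rightarrow> 'a::comm_ring_1 \<Rightarrow> ((nat \<Rightarrow> int) \<Rightarrow> 'a) \<Rightarrow> bool" where
  "exchange_relation m q F \<longleftrightarrow>
     (\<forall>la p. 1 \<le> p \<longrightarrow> Suc p \<le> m \<longrightarrow> la p = la (Suc p) \<longrightarrow> F (plusu la (Suc p)) = q * F (plusu la p))"

lemma exchange_relation_minusu:
  assumes "exchange_relation m q F" "1 \<le> p" "Suc p \<le> m" "la p = la (Suc p)"
  shows "F (minusu la p) = q * F (minusu la (Suc p))"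
proof -
  define \<nu> where "\<nu> = minusu (minusu la p) (Suc p)"
  have "\<nu> p = \<nu> (Suc p)" "plusu \<nu> (Suc p) = minusu la p" "plusu \<nu> p = minusu la (Suc p)"
    using assms(4) by (auto simp: \<nu>_def plusu_def minusu_def)
  with assms(1-3) show ?thesis unfolding exchange_relation_def by metis
qed

lemma exchange_run_plusu:
  assumes "exchange_relation m q F" "s + k \<le> m" "\<And>l. l \<in> {s<..s + k} \<Longrightarrow> la l = c" "d < k"
  shows "F (plusu la (s + Suc d)) = q ^ d * F (plusu la (Suc s))"
  using assms(4)
proof (induction d)
  case (Suc d)
  have "la (s + Suc d) = la (Suc (s + Suc d))" using assms(3) Suc.prems by simp
  then have "F (plusu la (Suc (s + Suc d))) = q * F (plusu la (s + Suc d))"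
    using assms(1,2) Suc.prems unfolding exchange_relation_def by simp
  then show ?case using Suc by simp
qed simp

lemma exchange_run_minusu:
  assumes "exchange_relation m q F" "s + k \<le> m" "\<And>l. l \<in> {s<..s + k} \<Longrightarrow> la l = c" "d < k"
  shows "F (minusu la (s + Suc d)) = q ^ (k - Suc d) * F (minusu la (s + k))"
proof -
  have "d \<le> k - 1" using assms(4) by simp
  then show ?thesis
  proof (induction d rule: inc_induct)
    case base
    then show ?case using assms(4) by simp
  next
    case (step d)
    have "la (s + Suc d) = la (Suc (s + Suc d))" using assms(3) step.hyps by simp
    then have "F (minusu la (s + Suc d)) = q * F (minusu la (s + Suc (Suc d)))"
      using exchange_relation_minusu[OF assms(1)] assms(2) step.hyps by simp
    moreover have "k - Suc d = Suc (k - Suc (Suc d))" using step.hyps by simp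
    ultimately show ?case using step.IH by simp
  qed
qed

lemma sum_greaterThanAtMost_shift: "(\<Sum>l\<in>{s<..s + k}. g l) = (\<Sum>d<k. g (s + Suc d))"
  by (rule sum.reindex_bij_witness[where i = "\<lambda>d. s + Suc d" and j = "\<lambda>l. l - Suc s"]) auto

lemma cluster_sum_plusu:
  assumes "exchange_relation m q F" "s + k \<le> m" "\<And>l. l \<in> {s<..s + k} \<Longrightarrow> la l = c"
  shows "(1 - q) * (\<Sum>l\<in>{s<..s + k}. F (plusu la l)) = (1 - q ^ k) * F (plusu la (Suc s))"
proof -
  have "(\<Sum>l\<in>{s<..s + k}. F (plusu la l)) = (\<Sum>d<k. q ^ d) * F (plusu la (Suc s))"
    unfolding sum_greaterThanAtMost_shift sum_distrib_right
    using exchange_run_plusu[OF assms] by (intro sum.cong) auto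
  then show ?thesis by (simp only: one_diff_power_eq mult.assoc)
qed

lemma cluster_sum_minusu:
  assumes "exchange_relation m q F" "s + k \<le> m" "\<And>l. l \<in> {s<..s + k} \<Longrightarrow> la l = c"
  shows "(1 - q) * (\<Sum>l\<in>{s<..s + k}. F (minusu la l)) = (1 - q ^ k) * F (minusu la (s + k))"
proof -
  have "(\<Sum>l\<in>{s<..s + k}. F (minusu la l)) = (\<Sum>d<k. q ^ (k - Suc d)) * F (minusu la (s + k))"
    unfolding sum_greaterThanAtMost_shift sum_distrib_right
    using exchange_run_minusu[OF assms] by (intro sum.cong) auto
  then show ?thesis by (simp only: one_diff_power_eq sum.nat_diff_reindex mult.assoc)
qed

lemma sum_telescope_blocks:
  fixes f :: "nat \<Rightarrow> nat"
  assumes "\<And>v. v \<le> N \<Longrightarrow> f (Suc v) \<le> f v"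
  shows "(\<Sum>v\<le>N. \<Sum>l\<in>{f (Suc v)<..f v}. g l) = (\<Sum>l\<in>{f (Suc N)<..f 0}. g l)"
  using assms
proof (induction N)
  case (Suc N)
  have "f (Suc (Suc N)) \<le> f (Suc N)" "f (Suc N) \<le> f 0"
    using Suc.prems decreasing_chain_le[of 0 "Suc N" f 0 "Suc N"] by auto
  then have "{f (Suc N)<..f 0} \<union> {f (Suc (Suc N))<..f (Suc N)} = {f (Suc (Suc N))<..f 0}"
    by auto
  then show ?case using Suc by (simp flip: sum.union_disjoint)
qed simp

locale conjugate_clusters =
  fixes n m :: nat and \<mu> :: "nat \<Rightarrow> int"
  assumes mu: "\<mu> \<in> Lam n m"
begin

definition lam :: "nat \<Rightarrow> int" where
  "lam = conj_part n m \<mu>"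

definition cluster_end :: "nat \<Rightarrow> nat" where
  "cluster_end v = nat (ext n m \<mu> v)"

definition cluster_size :: "nat \<Rightarrow> nat" where
  "cluster_size v = cluster_end v - cluster_end (Suc v)"

lemma of_nat_cluster_end: "v \<le> Suc n \<Longrightarrow> int (cluster_end v) = ext n m \<mu> v"
  unfolding cluster_end_def using ext_bounds(1)[OF mu] by simp

lemma cluster_end_0 [simp]: "cluster_end 0 = m" and cluster_end_Suc_n [simp]: "cluster_end (Suc n) = 0"
  unfolding cluster_end_def ext_def by auto

lemma cluster_end_Suc_le: "v \<le> n \<Longrightarrow> cluster_end (Suc v) \<le> cluster_end v"
  unfolding cluster_end_def using ext_Suc_le[OF mu] by (simp add: nat_mono)

lemma cluster_end_le: "v \<le> Suc n \<Longrightarrow> cluster_end v \<le> m"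
  unfolding cluster_end_def using ext_bounds(2)[OF mu] by (simp add: nat_le_iff)

lemma cluster_end_add_size: "v \<le> n \<Longrightarrow> cluster_end (Suc v) + cluster_size v = cluster_end v"
  unfolding cluster_size_def using cluster_end_Suc_le by simp

lemma nat_ext_diff: "v \<le> n \<Longrightarrow> nat (ext n m \<mu> v - ext n m \<mu> (Suc v)) = cluster_size v"
  unfolding cluster_size_def using of_nat_cluster_end[of v] of_nat_cluster_end[of "Suc v"] by simp

lemma lam_cluster: "v \<le> n \<Longrightarrow> l \<in> {cluster_end (Suc v)<..cluster_end v} \<Longrightarrow> lam l = int v"
  unfolding lam_def using conj_part_eq[OF mu] of_nat_cluster_end[of v] of_nat_cluster_end[of "Suc v"]
  by (simp del: of_nat_Suc)

lemma conjp_mu: "conjp n m \<mu> = lam"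
  unfolding lam_def by (rule conjp_eq_conj_part[OF mu])

lemma conjp_plusu:
  assumes "i \<in> {1..n}" "plusu \<mu> i \<in> Lam n m"
  shows "conjp n m (plusu \<mu> i) = plusu lam (Suc (cluster_end i))"
proof -
  have "0 \<le> \<mu> i" "\<mu> i + 1 \<le> int m"
    using LamD(2)[OF mu assms(1)] LamD(3)[OF assms(2,1)] by (simp_all add: plusu_def)
  then have "conj_part n m (plusu \<mu> i) = plusu (conj_part n m \<mu>) (nat (\<mu> i) + 1)"
    by (rule conj_part_plusu[OF assms(1)])
  then show ?thesis
    unfolding conjp_eq_conj_part[OF assms(2)] lam_def cluster_end_def ext_eq[OF assms(1)] by simp
qed

lemma conjp_minusu:
  assumes "i \<in> {1..n}" "minusu \<mu> i \<in> Lam n m"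
  shows "conjp n m (minusu \<mu> i) = minusu lam (cluster_end i)"
proof -
  have "1 \<le> \<mu> i" "\<mu> i \<le> int m"
    using LamD(2)[OF assms(2,1)] LamD(3)[OF mu assms(1)] by (simp_all add: minusu_def)
  then have "conj_part n m (minusu \<mu> i) = minusu (conj_part n m \<mu>) (nat (\<mu> i))"
    by (rule conj_part_minusu[OF assms(1)])
  then show ?thesis
    unfolding conjp_eq_conj_part[OF assms(2)] lam_def cluster_end_def ext_eq[OF assms(1)] by simp
qed

lemma cluster_size_eq_0_if_plusu_notin:
  assumes "i \<in> {1..n}" "plusu \<mu> i \<notin> Lam n m"
  shows "cluster_size (i - 1) = 0"
proof -
  have i: "i - 1 \<le> n" "Suc (i - 1) = i" using assms(1) by auto
  have "\<not> ext n m \<mu> i < ext n m \<mu> (i - 1)" using plusu_in_Lam[OF mu assms(1)] assms(2) by blast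
  then show ?thesis using nat_ext_diff[OF i(1)] unfolding i(2) by simp
qed

lemma cluster_size_eq_0_if_minusu_notin:
  assumes "i \<in> {1..n}" "minusu \<mu> i \<notin> Lam n m"
  shows "cluster_size i = 0"
proof -
  have "\<not> ext n m \<mu> (Suc i) < ext n m \<mu> i" using minusu_in_Lam[OF mu assms(1)] assms(2) by blast
  moreover have "i \<le> n" using assms(1) by simp
  ultimately show ?thesis using nat_ext_diff[of i] by simp
qed

text \<open>A move leaving \<open>\<Lambda>^{(n,m)}\<close> carries the weight \<open>1 - q^0 = 0\<close> in \<open>H\<close>, so the side condition
  can be dropped; an allowed move of particle \<open>i\<close> changes the first entry of cluster \<open>i - 1\<close>
  (raising) or the last entry of cluster \<open>i\<close> (lowering) of \<open>\<mu>'\<close>.\<close>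

lemma Ham_raise_sum:
  fixes F :: "(nat \<Rightarrow> int) \<Rightarrow> complex" and ap q :: real
  assumes "1 \<le> n"
  shows "(\<Sum>i\<in>{i\<in>{1..n}. plusu \<mu> i \<in> Lam n m}.
        complex_of_real ((if i = 1 then 1 - ap * q ^ nat (int m - ext n m \<mu> 1 - 1) else 1)
                         * (1 - q ^ nat (ext n m \<mu> (i - 1) - ext n m \<mu> i))) * F (conjp n m (plusu \<mu> i)))
    = (\<Sum>v<n. (1 - q ^ cluster_size v) * F (plusu lam (Suc (cluster_end (Suc v)))))
      - ap * q ^ (cluster_size 0 - 1) * (1 - q ^ cluster_size 0) * F (plusu lam (Suc (cluster_end 1)))"
    (is "(\<Sum>i\<in>_. ?term i) = _")
proof -
  define U where "U v = F (plusu lam (Suc (cluster_end (Suc v))))" for v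
  have top: "nat (int m - ext n m \<mu> 1 - 1) = cluster_size 0 - 1"
    using of_nat_cluster_end[of 1] assms unfolding cluster_size_def by simp
  have "(if plusu \<mu> i \<in> Lam n m then ?term i else 0) = (1 - q ^ cluster_size (i - 1)) * U (i - 1)
        - (if i = 1 then ap * q ^ (cluster_size 0 - 1) * (1 - q ^ cluster_size 0) * U 0 else 0)"
    if i: "i \<in> {1..n}" for i
  proof -
    have i': "i - 1 \<le> n" "Suc (i - 1) = i" using i by auto
    have size: "nat (ext n m \<mu> (i - 1) - ext n m \<mu> i) = cluster_size (i - 1)"
      using nat_ext_diff[OF i'(1)] unfolding i'(2) .
    show ?thesis
    proof (cases "plusu \<mu> i \<in> Lam n m")
      case True
      have "F (conjp n m (plusu \<mu> i)) = U (i - 1)" unfolding U_def i'(2) conjp_plusu[OF i True] ..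
      then show ?thesis using True unfolding size top by (cases "i = 1") (simp_all add: algebra_simps)
    next
      case False
      then have "cluster_size (i - 1) = 0" by (rule cluster_size_eq_0_if_plusu_notin[OF i])
      then show ?thesis using False by auto
    qed
  qed
  then have "(\<Sum>i\<in>{i\<in>{1..n}. plusu \<mu> i \<in> Lam n m}. ?term i) = (\<Sum>i=1..n. (1 - q ^ cluster_size (i - 1)) * U (i - 1)
          - (if i = 1 then ap * q ^ (cluster_size 0 - 1) * (1 - q ^ cluster_size 0) * U 0 else 0))"
    unfolding sum.inter_filter[OF finite_atLeastAtMost] by (rule sum.cong[OF refl])
  also have "\<dots> = (\<Sum>v<n. (1 - q ^ cluster_size v) * U v) - ap * q ^ (cluster_size 0 - 1) * (1 - q ^ cluster_size 0) * U 0"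
    using assms by (simp add: sum_subtractf sum.atLeast1_atMost_eq)
  finally show ?thesis unfolding U_def by simp
qed

lemma Ham_lower_sum:
  fixes F :: "(nat \<Rightarrow> int) \<Rightarrow> complex" and am q :: real
  assumes "1 \<le> n"
  shows "(\<Sum>i\<in>{i\<in>{1..n}. minusu \<mu> i \<in> Lam n m}.
        complex_of_real ((if i = n then 1 - am * q ^ nat (ext n m \<mu> n - 1) else 1)
                         * (1 - q ^ nat (ext n m \<mu> i - ext n m \<mu> (Suc i)))) * F (conjp n m (minusu \<mu> i)))
    = (\<Sum>v=1..n. (1 - q ^ cluster_size v) * F (minusu lam (cluster_end v)))
      - am * q ^ (cluster_size n - 1) * (1 - q ^ cluster_size n) * F (minusu lam (cluster_end n))"
    (is "(\<Sum>i\<in>_. ?term i) = _")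
proof -
  define L where "L v = F (minusu lam (cluster_end v))" for v
  have bottom: "nat (ext n m \<mu> n - 1) = cluster_size n - 1"
    using of_nat_cluster_end[of n] unfolding cluster_size_def by simp
  have "(if minusu \<mu> i \<in> Lam n m then ?term i else 0) = (1 - q ^ cluster_size i) * L i
        - (if i = n then am * q ^ (cluster_size n - 1) * (1 - q ^ cluster_size n) * L n else 0)"
    if i: "i \<in> {1..n}" for i
  proof -
    have size: "nat (ext n m \<mu> i - ext n m \<mu> (Suc i)) = cluster_size i" using nat_ext_diff i by simp
    show ?thesis
    proof (cases "minusu \<mu> i \<in> Lam n m")
      case True
      have "F (conjp n m (minusu \<mu> i)) = L i" unfolding L_def conjp_minusu[OF i True] ..
      then show ?thesis using True unfolding size bottom by (cases "i = n") (simp_all add: algebra_simps)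
    next
      case False
      then have "cluster_size i = 0" by (rule cluster_size_eq_0_if_minusu_notin[OF i])
      then show ?thesis using False by auto
    qed
  qed
  then have "(\<Sum>i\<in>{i\<in>{1..n}. minusu \<mu> i \<in> Lam n m}. ?term i) = (\<Sum>i=1..n. (1 - q ^ cluster_size i) * L i
          - (if i = n then am * q ^ (cluster_size n - 1) * (1 - q ^ cluster_size n) * L n else 0))"
    unfolding sum.inter_filter[OF finite_atLeastAtMost] by (rule sum.cong[OF refl])
  also have "\<dots> = (\<Sum>i=1..n. (1 - q ^ cluster_size i) * L i) - am * q ^ (cluster_size n - 1) * (1 - q ^ cluster_size n) * L n"
    using assms by (simp add: sum_subtractf)
  finally show ?thesis unfolding L_def by simp
qed

lemma Ham_conjp:
  fixes F :: "(nat \<Rightarrow> int) \<Rightarrow> complex" and ap bp am bm q :: real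
  assumes "1 \<le> n"
  shows "Ham ap bp am bm q n m (\<lambda>\<nu>. F (conjp n m \<nu>)) \<mu>
     = (bp * (1 - q ^ cluster_size 0) + bm * (1 - q ^ cluster_size n)) * F lam
     + ((\<Sum>v<n. (1 - q ^ cluster_size v) * F (plusu lam (Suc (cluster_end (Suc v)))))
        - ap * q ^ (cluster_size 0 - 1) * (1 - q ^ cluster_size 0) * F (plusu lam (Suc (cluster_end 1))))
     + ((\<Sum>v=1..n. (1 - q ^ cluster_size v) * F (minusu lam (cluster_end v)))
        - am * q ^ (cluster_size n - 1) * (1 - q ^ cluster_size n) * F (minusu lam (cluster_end n)))"
proof -
  have "nat (int m - ext n m \<mu> 1) = cluster_size 0" "nat (ext n m \<mu> n) = cluster_size n"
    using of_nat_cluster_end[of 1] of_nat_cluster_end[of n] assms unfolding cluster_size_def by simp_all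
  then show ?thesis
    unfolding Ham_def Ham_raise_sum[OF assms] Ham_lower_sum[OF assms] conjp_mu by simp
qed

lemma free_sum_clusters:
  assumes "exchange_relation m q F"
  shows "(1 - q) * (\<Sum>l=1..m. F (plusu lam l) + F (minusu lam l))
       = (\<Sum>v\<le>n. (1 - q ^ cluster_size v) * (F (plusu lam (Suc (cluster_end (Suc v)))) + F (minusu lam (cluster_end v))))"
proof -
  have "(\<Sum>v\<le>n. \<Sum>l\<in>{cluster_end (Suc v)<..cluster_end v}. F (plusu lam l) + F (minusu lam l))
      = (\<Sum>l\<in>{cluster_end (Suc n)<..cluster_end 0}. F (plusu lam l) + F (minusu lam l))"
    by (rule sum_telescope_blocks) (rule cluster_end_Suc_le)
  then have "(\<Sum>l=1..m. F (plusu lam l) + F (minusu lam l))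
      = (\<Sum>v\<le>n. \<Sum>l\<in>{cluster_end (Suc v)<..cluster_end v}. F (plusu lam l) + F (minusu lam l))"
    by (simp add: atLeastSucAtMost_greaterThanAtMost)
  then have "(1 - q) * (\<Sum>l=1..m. F (plusu lam l) + F (minusu lam l))
      = (\<Sum>v\<le>n. (1 - q) * (\<Sum>l\<in>{cluster_end (Suc v)<..cluster_end v}. F (plusu lam l) + F (minusu lam l)))"
    by (simp add: sum_distrib_left)
  also have "\<dots> = (\<Sum>v\<le>n. (1 - q ^ cluster_size v)
      * (F (plusu lam (Suc (cluster_end (Suc v)))) + F (minusu lam (cluster_end v))))"
  proof (rule sum.cong[OF refl])
    fix v assume "v \<in> {..n}"
    then have v: "v \<le> n" by simp
    have run: "lam l = int v" if "l \<in> {cluster_end (Suc v)<..cluster_end (Suc v) + cluster_size v}" for l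
      using lam_cluster[OF v] that unfolding cluster_end_add_size[OF v] .
    have bound: "cluster_end (Suc v) + cluster_size v \<le> m"
      using cluster_end_le[of v] v unfolding cluster_end_add_size[OF v] by simp
    show "(1 - q) * (\<Sum>l\<in>{cluster_end (Suc v)<..cluster_end v}. F (plusu lam l) + F (minusu lam l))
        = (1 - q ^ cluster_size v) * (F (plusu lam (Suc (cluster_end (Suc v)))) + F (minusu lam (cluster_end v)))"
      using cluster_sum_plusu[OF assms bound run] cluster_sum_minusu[OF assms bound run]
      unfolding cluster_end_add_size[OF v] sum.distrib distrib_left by simp
  qed
  finally show ?thesis .
qed

lemma boundary_cluster_zero:
  assumes "exchange_relation m q F"
    and zero: "\<And>la. 1 \<le> m \<Longrightarrow> la m = 0 \<Longrightarrow> F (minusu la m) = bp * F la - ap * F (plusu la m)"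
  shows "(1 - q ^ cluster_size 0) * F (minusu lam (cluster_end 0))
       = (1 - q ^ cluster_size 0) * (bp * F lam - ap * q ^ (cluster_size 0 - 1) * F (plusu lam (Suc (cluster_end 1))))"
proof (cases "cluster_size 0 = 0")
  case False
  have size: "cluster_end 1 + cluster_size 0 = m" using cluster_end_add_size[of 0] by simp
  have run: "l \<in> {cluster_end 1<..cluster_end 1 + cluster_size 0} \<Longrightarrow> lam l = 0" for l
    using lam_cluster[of 0 l] size by simp
  have "F (plusu lam (cluster_end 1 + Suc (cluster_size 0 - 1))) = q ^ (cluster_size 0 - 1) * F (plusu lam (Suc (cluster_end 1)))"
    by (rule exchange_run_plusu[OF assms(1), where k = "cluster_size 0" and c = 0]) (use size run False in auto)
  moreover have "lam m = 0" "1 \<le> m" using run[of m] size False by auto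
  ultimately show ?thesis using zero[of lam] size False by (simp add: mult.assoc)
qed simp

lemma boundary_cluster_n:
  assumes "exchange_relation m q F"
    and top: "\<And>la. 1 \<le> m \<Longrightarrow> la 1 = int n \<Longrightarrow> F (plusu la 1) + am * F (minusu la 1) = bm * F la"
  shows "(1 - q ^ cluster_size n) * F (plusu lam (Suc (cluster_end (Suc n))))
       = (1 - q ^ cluster_size n) * (bm * F lam - am * q ^ (cluster_size n - 1) * F (minusu lam (cluster_end n)))"
proof (cases "cluster_size n = 0")
  case False
  have size: "0 + cluster_size n = cluster_end n" using cluster_end_add_size[of n] by simp
  have run: "l \<in> {0<..0 + cluster_size n} \<Longrightarrow> lam l = int n" for l
    using lam_cluster[of n l] size by simp
  have "F (minusu lam (0 + Suc 0)) = q ^ (cluster_size n - Suc 0) * F (minusu lam (0 + cluster_size n))"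
    by (rule exchange_run_minusu[OF assms(1), where c = "int n"]) (use size run cluster_end_le[of n] False in auto)
  moreover have "lam 1 = int n" "1 \<le> m" using run[of 1] size cluster_end_le[of n] False by auto
  ultimately have "F (plusu lam 1) + am * (q ^ (cluster_size n - 1) * F (minusu lam (cluster_end n))) = bm * F lam"
    using top[of lam] size by simp
  then have "F (plusu lam 1) = bm * F lam - am * q ^ (cluster_size n - 1) * F (minusu lam (cluster_end n))"
    by (simp add: eq_diff_eq mult.assoc)
  then show ?thesis by simp
qed simp

theorem Ham_conjp_eigen:
  fixes F :: "(nat \<Rightarrow> int) \<Rightarrow> complex" and ap bp am bm q :: real and E :: complex
  assumes "1 \<le> n"
    and exchange: "exchange_relation m (complex_of_real q) F"
    and zero: "\<And>la. 1 \<le> m \<Longrightarrow> la m = 0 \<Longrightarrow> F (minusu la m) = bp * F la - ap * F (plusu la m)"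
    and top: "\<And>la. 1 \<le> m \<Longrightarrow> la 1 = int n \<Longrightarrow> F (plusu la 1) + am * F (minusu la 1) = bm * F la"
    and free: "\<And>la. (1 - q) * (\<Sum>l=1..m. F (plusu la l) + F (minusu la l)) = E * F la"
  shows "Ham ap bp am bm q n m (\<lambda>\<nu>. F (conjp n m \<nu>)) \<mu> = E * F (conjp n m \<mu>)"
proof -
  define U L where "U v = F (plusu lam (Suc (cluster_end (Suc v))))" and "L v = F (minusu lam (cluster_end v))" for v
  define raise lower where "raise = (\<Sum>v<n. (1 - q ^ cluster_size v) * U v)"
    and "lower = (\<Sum>v=1..n. (1 - q ^ cluster_size v) * L v)"
  have ham: "Ham ap bp am bm q n m (\<lambda>\<nu>. F (conjp n m \<nu>)) \<mu>
      = (bp * (1 - q ^ cluster_size 0) + bm * (1 - q ^ cluster_size n)) * F lam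
        + (raise - ap * q ^ (cluster_size 0 - 1) * (1 - q ^ cluster_size 0) * U 0)
        + (lower - am * q ^ (cluster_size n - 1) * (1 - q ^ cluster_size n) * L n)"
    unfolding Ham_conjp[OF assms(1)] raise_def lower_def U_def L_def by simp
  have "E * F lam = (\<Sum>v\<le>n. (1 - q ^ cluster_size v) * (U v + L v))"
    using free[of lam] free_sum_clusters[OF exchange] unfolding U_def L_def by simp
  also have "\<dots> = raise + (1 - q ^ cluster_size n) * U n + ((1 - q ^ cluster_size 0) * L 0 + lower)"
  proof -
    have top: "(\<Sum>v\<le>n. g v) = (\<Sum>v<n. g v) + g n" for g :: "nat \<Rightarrow> complex"
      by (simp add: lessThan_Suc_atMost[symmetric])
    have bottom: "(\<Sum>v\<le>n. g v) = g 0 + (\<Sum>v=1..n. g v)" for g :: "nat \<Rightarrow> complex"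
      by (simp add: atMost_atLeast0 sum.atLeast_Suc_atMost)
    show ?thesis
      unfolding distrib_left sum.distrib top[of "\<lambda>v. (1 - q ^ cluster_size v) * U v"]
        bottom[of "\<lambda>v. (1 - q ^ cluster_size v) * L v"] raise_def lower_def by simp
  qed
  finally have eig: "E * F lam = raise + (1 - q ^ cluster_size n) * U n + ((1 - q ^ cluster_size 0) * L 0 + lower)" .
  have boundaries: "(1 - q ^ cluster_size 0) * L 0 = (1 - q ^ cluster_size 0) * (bp * F lam - ap * q ^ (cluster_size 0 - 1) * U 0)"
    "(1 - q ^ cluster_size n) * U n = (1 - q ^ cluster_size n) * (bm * F lam - am * q ^ (cluster_size n - 1) * L n)"
    using boundary_cluster_zero[OF exchange zero] boundary_cluster_n[OF exchange top] unfolding U_def L_def by simp_all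
  show ?thesis unfolding ham conjp_mu eig boundaries by (simp add: algebra_simps)
qed

end

theorem theorem3p1:
  fixes m n :: nat and q pp qp pm qm :: real and \<xi> :: "nat \<Rightarrow> real"
  assumes "1 \<le> n"
    and "-1 < q" "q < 1" "q \<noteq> 0"
    and "-1 < pp" "pp < 1" "pp \<noteq> 0" "-1 < qp" "qp < 1" "qp \<noteq> 0"
    and "-1 < pm" "pm < 1" "pm \<noteq> 0" "-1 < qm" "qm < 1" "qm \<noteq> 0"
    and "reg m \<xi>"
    and "bethe (pp * qp) (pp + qp) (pm * qm) (pm + qm) q n m \<xi>"
  shows "\<forall>\<mu>\<in>Lam n m.
           Ham (pp * qp) (pp + qp) (pm * qm) (pm + qm) q n m
               (\<lambda>\<nu>. HLR (pp * qp) (pp + qp) q m (conjp n m \<nu>) \<xi>) \<mu>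
         = complex_of_real (2 * (1 - q) * (\<Sum>j=1..m. cos (\<xi> j)))
           * HLR (pp * qp) (pp + qp) q m (conjp n m \<mu>) \<xi>"
proof
  fix \<mu> assume "\<mu> \<in> Lam n m"
  then interpret conjugate_clusters n m \<mu> by unfold_locales
  have bounds: "\<bar>pp\<bar> < 1" "\<bar>qp\<bar> < 1" "\<bar>pm\<bar> < 1" "\<bar>qm\<bar> < 1" "\<bar>q\<bar> < 1" using assms by auto
  show "Ham (pp * qp) (pp + qp) (pm * qm) (pm + qm) q n m
          (\<lambda>\<nu>. HLR (pp * qp) (pp + qp) q m (conjp n m \<nu>) \<xi>) \<mu>
      = complex_of_real (2 * (1 - q) * (\<Sum>j=1..m. cos (\<xi> j))) * HLR (pp * qp) (pp + qp) q m (conjp n m \<mu>) \<xi>"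
  proof (rule Ham_conjp_eigen[where F = "\<lambda>la. HLR (pp * qp) (pp + qp) q m la \<xi>", OF assms(1)])
    show "exchange_relation m (complex_of_real q) (\<lambda>la. HLR (pp * qp) (pp + qp) q m la \<xi>)"
      unfolding exchange_relation_def using HLR_exchange[OF assms(17)] by blast
  qed (use HLR_boundary_zero[OF assms(17)] HLR_boundary_n[OF assms(17) _ _ assms(18) bounds] HLR_free in auto)
qed

end
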